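(* Let $p\in[1,\infty]$, $s>1+\frac1p$, let $u_0$ and $u_0^n$ be the functions defined below, and set $$u^{\mathrm{ap},4}_{n,1}(t,x)=(\Delta_nu_0)(x-tu_0(x)),\qquad u^{\mathrm{ap},4}_{n,2}(t,x)=(\Delta_nu_0^n)(x-tu_0^n(x)),\qquad t_n=\tfrac{8}{11}\pi n2^{-n}.$$ Let $N_0$ be a sufficiently large integer such that $\phi(x)\ge\phi(0)/2$ for all $x\in[0,2\pi2^{-N_0}]$. Then for all sufficiently large $n$ (with $n\gg N_0$), $$2^{ns}\big\|u^{\mathrm{ap},4}_{n,1}(t_n)-u^{\mathrm{ap},4}_{n,2}(t_n)\big\|_{L^p(\mathbb{R})}\ge2^{-\frac{N_0}{p}-3},$$ with the convention $\frac{N_0}{p}=0$ for $p=\infty$.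
   Context: Littlewood–Paley blocks on $\mathbb{R}$: with a smooth even $\vartheta:\mathbb{R}\to[0,1]$, $\operatorname{supp}\vartheta\subset[-4/3,4/3]$, $\vartheta\equiv1$ on $|\xi|\le3/4$, $\varphi(\xi)=\vartheta(\xi/2)-\vartheta(\xi)$, $\Delta_{-1}=\vartheta(D)$, $\Delta_j=\varphi(2^{-j}D)$ for $j\ge0$. Let $\widehat\phi\in C_c^\infty(\mathbb{R})$ be even, real, with values in $[0,1]$, $\widehat\phi=1$ on $|\xi|\le1/4$, $\widehat\phi=0$ on $|\xi|\ge1/2$, and $\phi$ the real Schwartz function whose Fourier transform is a positive multiple of $\widehat\phi$ ($\phi(0)=\|\phi\|_\infty>0$). Let $\gamma(s)=2^{2s}(2^s-1)$, $\tilde\phi=\gamma(s)\phi/\phi(0)$, $u_0(x)=\sum_{j\ge3}2^{-js}\tilde\phi(x)\cos(\frac{11}{8}2^jx)$. Let $\widehat\psi\in C_c^\infty(\mathbb{R})$ be even, real, with values in $[0,1]$, $\widehat\psi=1$ on $\frac12\le|\xi|\le\frac58$, $\widehat\psi=0$ on $|\xi|\ge\frac34$ or $|\xi|\le\frac38$, $\psi$ the real Schwartz function with Fourier transform a positive multiple of $\widehat\psi$ ($\psi(0)=\|\psi\|_\infty>0$), $\Phi=\psi/\psi(0)$, and $u_0^n=u_0+\frac1n\Phi$. *)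

theory Defs
  imports "HOL-Analysis.Analysis" "HOL-Probability.Essential_Supremum"
begin

definition smooth_fun :: "(real \<Rightarrow> real) \<Rightarrow> bool" where
  "smooth_fun f \<longleftrightarrow> (\<forall>k::nat. \<forall>x. ((deriv ^^ k) f) differentiable (at x))"

definition fourier :: "(real \<Rightarrow> complex) \<Rightarrow> real \<Rightarrow> complex" where
  "fourier f \<xi> = (LINT x|lborel. f x * cis (- (x * \<xi>)))"

definition inv_fourier :: "(real \<Rightarrow> complex) \<Rightarrow> real \<Rightarrow> complex" where
  "inv_fourier g x = (LINT \<xi>|lborel. g \<xi> * cis (x * \<xi>)) / complex_of_real (2 * pi)"

definition fmult :: "(real \<Rightarrow> real) \<Rightarrow> (real \<Rightarrow> real) \<Rightarrow> real \<Rightarrow> complex" where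
  "fmult m f = inv_fourier (\<lambda>\<xi>. complex_of_real (m \<xi>) * fourier (\<lambda>x. complex_of_real (f x)) \<xi>)"

definition lp_varphi :: "(real \<Rightarrow> real) \<Rightarrow> real \<Rightarrow> real" where
  "lp_varphi th \<xi> = th (\<xi> / 2) - th \<xi>"

definition LP_block :: "(real \<Rightarrow> real) \<Rightarrow> int \<Rightarrow> (real \<Rightarrow> real) \<Rightarrow> real \<Rightarrow> complex" where
  "LP_block th j f =
     (if j = -1 then fmult th f
      else if j \<ge> 0 then fmult (\<lambda>\<xi>. lp_varphi th (\<xi> / 2 powr (real_of_int j))) f
      else (\<lambda>_. 0))"

definition Lp_norm :: "ennreal \<Rightarrow> (real \<Rightarrow> complex) \<Rightarrow> ennreal" where
  "Lp_norm p f =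
     (if p = \<infinity> then esssup lborel (\<lambda>x. ennreal (cmod (f x)))
      else (let I = (\<integral>\<^sup>+ x. ennreal (cmod (f x) powr enn2real p) \<partial>lborel)
            in if I = \<infinity> then \<infinity> else ennreal (enn2real I powr (1 / enn2real p))))"

definition inv_exp :: "ennreal \<Rightarrow> real" where
  "inv_exp p = (if p = \<infinity> then 0 else 1 / enn2real p)"

text \<open>The Schwartz functions phi and psi (normalised so that their Fourier transforms are
  exactly phi-hat and psi-hat; only phi/phi(0) and psi/psi(0) enter the data).\<close>
definition schw_of :: "(real \<Rightarrow> real) \<Rightarrow> real \<Rightarrow> real" where
  "schw_of h x = Re (inv_fourier (\<lambda>\<xi>. complex_of_real (h \<xi>)) x)"

definition gam :: "real \<Rightarrow> real" where
  "gam s = 2 powr (2 * s) * (2 powr s - 1)"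

definition phi_tilde :: "(real \<Rightarrow> real) \<Rightarrow> real \<Rightarrow> real \<Rightarrow> real" where
  "phi_tilde \<phi>h s x = gam s * schw_of \<phi>h x / schw_of \<phi>h 0"

definition u0 :: "(real \<Rightarrow> real) \<Rightarrow> real \<Rightarrow> real \<Rightarrow> real" where
  "u0 \<phi>h s x = (\<Sum>j. 2 powr (- (real (j + 3)) * s) * phi_tilde \<phi>h s x
                        * cos (11 / 8 * 2 ^ (j + 3) * x))"

definition Phi_fun :: "(real \<Rightarrow> real) \<Rightarrow> real \<Rightarrow> real" where
  "Phi_fun \<psi>h x = schw_of \<psi>h x / schw_of \<psi>h 0"

definition u0n :: "(real \<Rightarrow> real) \<Rightarrow> (real \<Rightarrow> real) \<Rightarrow> real \<Rightarrow> nat \<Rightarrow> real \<Rightarrow> real" where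
  "u0n \<phi>h \<psi>h s n x = u0 \<phi>h s x + Phi_fun \<psi>h x / real n"

end

theory Submission
  imports Defs "HOL-Probability.Characteristic_Functions" "HOL-Probability.Sinc_Integral"
    "HOL-Real_Asymp.Real_Asymp"
begin

text \<open>
  For \<open>n \<ge> 4\<close> the \<open>n\<close>-th Littlewood--Paley block of \<open>u0\<close> is its single term
  \<open>2^(-n s) phi_tilde(x) cos(11/8 2^n x)\<close>: the \<open>j\<close>-th term of \<open>u0\<close> has its spectrum within
  \<open>1/2\<close> of \<open>11/8 2^(j+3)\<close>, where the block multiplier is one for \<open>j = n - 3\<close> and zero
  otherwise. The correction \<open>\<Phi>/n\<close> has its spectrum in \<open>|\<xi>| < 3/4\<close>, where every block with
  \<open>n \<ge> 1\<close> vanishes, so both initial data have the same block. Computing these spectra requires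
  Fourier inversion for the bumps \<open>\<phi>h\<close> and \<open>\<psi>h\<close>.

  The two compositions therefore differ only through the characteristics, which at time \<open>t_n\<close>
  are \<open>t_n \<Phi>(x)/n\<close> apart; the carrier frequency \<open>11/8 2^n\<close> turns this gap into the phase
  shift \<open>pi \<Phi>(x)\<close>, close to \<open>pi\<close> for small \<open>x\<close>. The two cosines then almost cancel in sign,
  and where \<open>phi_tilde \<ge> gam s / 2\<close> the difference is at least
  \<open>2^(-n s) gam s (|cos \<theta>(x)| - 1/10)\<close> for the phase \<open>\<theta>\<close> of the first composition. A shift of
  \<open>x\<close> by a quarter period of the carrier turns \<open>cos \<theta>\<close> into \<open>sin \<theta>\<close> up to a small drift
  of \<open>u0\<close>, so for every \<open>x\<close> in \<open>[2^(-N0), 2^(1-N0)]\<close> the difference is at least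
  \<open>2^(-n s) gam s / 2\<close> at \<open>x\<close> or at its shift, and translation invariance of Lebesgue measure
  yields the \<open>L^p\<close> bound.
\<close>

lemma smooth_fun_DERIV:
  assumes "smooth_fun f"
  shows "((deriv ^^ k) f has_real_derivative (deriv ^^ Suc k) f x) (at x)"
  using assms unfolding smooth_fun_def by (simp add: DERIV_deriv_iff_real_differentiable)

lemma smooth_fun_isCont:
  assumes "smooth_fun f"
  shows "isCont ((deriv ^^ k) f) x"
  using smooth_fun_DERIV[OF assms] DERIV_isCont by blast

lemma norm_cis_diff_le: "cmod (cis a - cis b) \<le> \<bar>a - b\<bar>"
proof -
  have "cis a - cis b = cis b * (cis (a - b) - 1)"
    by (simp add: right_diff_distrib cis_mult)
  then have "cmod (cis a - cis b) = cmod (iexp (a - b) - 1)"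
    by (simp add: norm_mult cis_conv_exp)
  also have "\<dots> \<le> \<bar>a - b\<bar>"
    using iexp_approx1[of "a - b" 0] by simp
  finally show ?thesis .
qed

lemma abs_cos_diff_le: "\<bar>cos a - cos b\<bar> \<le> \<bar>a - b :: real\<bar>"
  using abs_Re_le_cmod[of "cis a - cis b"] norm_cis_diff_le[of a b] by simp

lemma abs_sin_diff_le: "\<bar>sin a - sin b\<bar> \<le> \<bar>a - b :: real\<bar>"
  using abs_Im_le_cmod[of "cis a - cis b"] norm_cis_diff_le[of a b] by simp

lemma inv_exp_nonneg: "0 \<le> inv_exp p"
  by (simp add: inv_exp_def)

lemma inv_exp_le_one:
  assumes "1 \<le> p"
  shows "inv_exp p \<le> 1"
proof (cases p)
  case (real q)
  with assms have "1 \<le> q" using ennreal_le_iff[of q 1] by simp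
  with real show ?thesis by (simp add: inv_exp_def)
qed (simp add: inv_exp_def)

section \<open>Lower bounds for \<open>L\<^sup>p\<close> norms\<close>

lemma AE_lborel_translate:
  fixes P :: "real \<Rightarrow> bool"
  assumes [measurable]: "Measurable.pred borel P" and "AE x in lborel. P x"
  shows "AE x in lborel. P (d + x)"
proof -
  have "AE x in distr lborel borel ((+) d). P x"
    using assms(2) by (simp only: lborel_distr_plus)
  then show ?thesis by (subst (asm) AE_distr_iff) auto
qed

text \<open>If at every point of \<open>[a, a + L]\<close> either \<open>f\<close> or its translate by \<open>d\<close> has modulus at
  least \<open>c\<close>, translation invariance of Lebesgue measure gives \<open>{|f| \<ge> c}\<close> measure at least \<open>L/2\<close>.\<close>

context
  fixes f :: "real \<Rightarrow> complex" and a c d L :: real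
  assumes f_borel [measurable]: "f \<in> borel_measurable borel"
    and L_pos: "L > 0"
    and alternative: "\<And>x. x \<in> {a..a + L} \<Longrightarrow> c \<le> cmod (f x) \<or> c \<le> cmod (f (x + d))"
begin

lemma esssup_ge_of_alternative: "ennreal c \<le> esssup lborel (\<lambda>x. ennreal (cmod (f x)))"
proof (rule ccontr)
  assume "\<not> ?thesis"
  then have less: "esssup lborel (\<lambda>x. ennreal (cmod (f x))) < ennreal c" by simp
  have "AE x in lborel. ennreal (cmod (f x)) \<le> esssup lborel (\<lambda>x. ennreal (cmod (f x)))"
    by (rule esssup_AE)
  then have small: "AE x in lborel. cmod (f x) < c"
    by eventually_elim (use less in \<open>auto simp: ennreal_less_iff dest: order.strict_trans1\<close>)
  moreover have "AE x in lborel. cmod (f (d + x)) < c"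
    by (rule AE_lborel_translate[OF _ small]) measurable
  ultimately have "AE x in lborel. x \<notin> {a..a + L}"
    by eventually_elim (use alternative in \<open>force simp: add.commute\<close>)
  then have "{a..a + L} \<in> null_sets lborel" by (subst AE_iff_null_sets) auto
  then show False using L_pos by (simp add: null_sets_def)
qed

lemma nn_integral_powr_ge_of_alternative:
  assumes "c > 0" "q \<ge> 1"
  shows "ennreal (c powr q * L) \<le> 2 * (\<integral>\<^sup>+ x. ennreal (cmod (f x) powr q) \<partial>lborel)"
proof -
  define g where "g x = ennreal (cmod (f x) powr q)" for x
  have [measurable]: "g \<in> borel_measurable borel" unfolding g_def by measurable
  have "ennreal (c powr q) * indicator {a..a + L} x \<le> g x + g (d + x)" for x
  proof (cases "x \<in> {a..a + L}")
    case True
    then have "ennreal (c powr q) \<le> g x \<or> ennreal (c powr q) \<le> g (d + x)"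
      using alternative[OF True] assms unfolding g_def
      by (auto intro!: ennreal_leI powr_mono2 simp: add.commute)
    then show ?thesis using True by (auto intro: order_trans add_increasing add_increasing2)
  qed simp
  then have "(\<integral>\<^sup>+ x. ennreal (c powr q) * indicator {a..a + L} x \<partial>lborel)
      \<le> (\<integral>\<^sup>+ x. g x + g (d + x) \<partial>lborel)"
    by (rule nn_integral_mono)
  also have "\<dots> = (\<integral>\<^sup>+ x. g x \<partial>lborel) + (\<integral>\<^sup>+ x. g (d + x) \<partial>lborel)"
    by (rule nn_integral_add) auto
  also have "(\<integral>\<^sup>+ x. g (d + x) \<partial>lborel) = (\<integral>\<^sup>+ x. g x \<partial>lborel)"
    using nn_integral_real_affine[of g 1 d] by simp
  finally show ?thesis
    using L_pos by (simp add: g_def nn_integral_cmult_indicator ennreal_mult mult_2)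
qed

lemma Lp_norm_ge_of_alternative:
  assumes "c > 0" "p \<ge> 1"
  shows "ennreal (c * (L / 2) powr inv_exp p) \<le> Lp_norm p f"
proof (cases p)
  case (real q)
  then have q: "q \<ge> 1" using assms(2) ennreal_le_iff[of q 1] by simp
  define I where "I = (\<integral>\<^sup>+ x. ennreal (cmod (f x) powr q) \<partial>lborel)"
  have le: "ennreal (c powr q * L) \<le> 2 * I"
    unfolding I_def by (rule nn_integral_powr_ge_of_alternative[OF assms(1) q])
  show ?thesis
  proof (cases "I = \<infinity>")
    case False
    then obtain r where r: "I = ennreal r" "r \<ge> 0" by (cases I) auto
    have "2 * I = ennreal (2 * r)"
      using r by (simp add: ennreal_mult)
    then have "c powr q * (L / 2) \<le> r"
      using le r(2) by simp
    then have "(c powr q * (L / 2)) powr (1 / q) \<le> r powr (1 / q)"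
      using assms(1) L_pos q by (intro powr_mono2) auto
    moreover have "(c powr q * (L / 2)) powr (1 / q) = c * (L / 2) powr (1 / q)"
      using assms(1) L_pos q by (subst powr_mult) (auto simp: powr_powr)
    moreover have "Lp_norm p f = ennreal (r powr (1 / q))"
      using real q r by (simp add: Lp_norm_def Let_def I_def[symmetric])
    ultimately show ?thesis
      using real q by (simp add: inv_exp_def ennreal_leI)
  qed (use real q in \<open>simp add: Lp_norm_def I_def\<close>)
qed (use esssup_ge_of_alternative in \<open>simp add: Lp_norm_def inv_exp_def\<close>)

end

section \<open>Fourier inversion for smooth bumps\<close>

lemma integrable_gaussian:
  assumes "\<sigma> \<noteq> 0"
  shows "integrable lborel (\<lambda>x::real. exp (- (\<sigma> * x)\<^sup>2 / 2))"
proof -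
  have "integrable lborel (\<lambda>x. std_normal_density (0 + \<sigma> * x))"
    by (rule lborel_integrable_real_affine[OF _ assms]) simp
  then have "integrable lborel (\<lambda>x. sqrt (2 * pi) * std_normal_density (\<sigma> * x))"
    by simp
  then show ?thesis by (simp add: std_normal_density_def)
qed

lemma fourier_gaussian:
  assumes "\<sigma> > 0"
  shows "(\<integral>x. complex_of_real (exp (- (\<sigma> * x)\<^sup>2 / 2)) * cis (x * w) \<partial>lborel)
         = complex_of_real (2 * pi * std_normal_density (w / \<sigma>) / \<sigma>)"
proof -
  let ?f = "\<lambda>x. complex_of_real (exp (- (\<sigma> * x)\<^sup>2 / 2)) * cis (x * w)"
  have "(\<integral>x. ?f x \<partial>lborel) = \<bar>1 / \<sigma>\<bar> *\<^sub>R (\<integral>z. ?f (0 + 1 / \<sigma> * z) \<partial>lborel)"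
    by (rule lborel_integral_real_affine) (use assms in simp)
  also have "(\<lambda>z. ?f (0 + 1 / \<sigma> * z))
      = (\<lambda>z. complex_of_real (sqrt (2 * pi)) * (std_normal_density z *\<^sub>R iexp (w / \<sigma> * z)))"
    using assms by (simp add: fun_eq_iff std_normal_density_def scaleR_conv_of_real cis_conv_exp ac_simps)
  also have "(\<integral>z. complex_of_real (sqrt (2 * pi)) * (std_normal_density z *\<^sub>R iexp (w / \<sigma> * z)) \<partial>lborel)
      = complex_of_real (sqrt (2 * pi)) * char std_normal_distribution (w / \<sigma>)"
  proof -
    have "(\<integral>z. std_normal_density z *\<^sub>R iexp (w / \<sigma> * z) \<partial>lborel) = char std_normal_distribution (w / \<sigma>)"
      unfolding char_def by (rule integral_density[symmetric]) auto
    then show ?thesis by (simp only: integral_mult_right_zero)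
  qed
  also have "\<dots> = complex_of_real (sqrt (2 * pi) * exp (- (w / \<sigma>)\<^sup>2 / 2))"
    by (simp add: char_std_normal_distribution)
  also have "sqrt (2 * pi) * exp (- (w / \<sigma>)\<^sup>2 / 2) = 2 * pi * std_normal_density (w / \<sigma>)"
  proof -
    define r where "r = sqrt (2 * pi)"
    have r: "2 * pi = r * r" "r > 0"
      by (simp_all add: r_def)
    show ?thesis
      unfolding std_normal_density_def r_def[symmetric] unfolding r(1) using r(2) by simp
  qed
  finally show ?thesis using assms by (simp add: scaleR_conv_of_real)
qed

lemma borel_measurable_cis [measurable]: "cis \<in> borel_measurable borel"
  by (intro borel_measurable_continuous_onI continuous_intros)

locale bump =
  fixes h :: "real \<Rightarrow> real" and a b :: real
  assumes smooth: "smooth_fun h"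
    and symmetric: "\<And>\<xi>. h (- \<xi>) = h \<xi>"
    and bounds: "\<And>\<xi>. 0 \<le> h \<xi> \<and> h \<xi> \<le> 1"
    and zero_outside: "\<And>\<xi>. 1 \<le> \<bar>\<xi>\<bar> \<Longrightarrow> h \<xi> = 0"
    and plateau: "a < b" "\<And>\<xi>. a \<le> \<xi> \<Longrightarrow> \<xi> \<le> b \<Longrightarrow> h \<xi> = 1"
begin

abbreviation "S \<equiv> schw_of h"

lemma h_isCont: "isCont h x"
  using smooth_fun_isCont[OF smooth, where k = 0] by simp

lemma h_continuous_on [continuous_intros]: "continuous_on A h"
  by (simp add: continuous_at_imp_continuous_on h_isCont)

lemma h_borel [measurable]: "h \<in> borel_measurable borel"
  by (intro borel_measurable_continuous_onI h_continuous_on)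

lemma h_integrable: "integrable lborel h"
proof -
  have "integrable lborel (\<lambda>x. indicator {-1..1::real} x *\<^sub>R h x)"
    by (intro borel_integrable_compact h_continuous_on) auto
  moreover have "(\<lambda>x. indicator {-1..1} x *\<^sub>R h x) = h"
    using zero_outside by (force simp: indicator_def fun_eq_iff)
  ultimately show ?thesis by simp
qed

lemma h_integral_pos: "integral\<^sup>L lborel h > 0"
proof -
  have "integral\<^sup>L lborel (indicator {a..b}) \<le> integral\<^sup>L lborel h"
    using bounds plateau by (intro integral_mono h_integrable) (auto simp: indicator_def)
  then show ?thesis using plateau(1) by simp
qed

definition ift :: "real \<Rightarrow> complex" where
  "ift x = (\<integral>\<xi>. complex_of_real (h \<xi>) * cis (x * \<xi>) \<partial>lborel)"

lemma ift_integrand_borel [measurable]: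
  "(\<lambda>\<xi>. complex_of_real (h \<xi>) * cis (x * \<xi>)) \<in> borel_measurable lborel"
  by (simp add: borel_measurable_continuous_onI continuous_intros)

lemma ift_integrable: "integrable lborel (\<lambda>\<xi>. complex_of_real (h \<xi>) * cis (x * \<xi>))"
  by (rule Bochner_Integration.integrable_bound[OF h_integrable]) (auto simp: norm_mult)

lemma ift_real: "ift x = complex_of_real (Re (ift x))"
proof -
  have "cnj (ift x) = (\<integral>\<xi>. cnj (complex_of_real (h \<xi>) * cis (x * \<xi>)) \<partial>lborel)"
    unfolding ift_def by (simp only: Bochner_Integration.integral_cnj)
  also have "\<dots> = ift (- x)"
    by (simp add: ift_def cis_cnj)
  also have "\<dots> = \<bar>-1\<bar> *\<^sub>R (\<integral>\<xi>. complex_of_real (h (0 + -1 * \<xi>)) * cis (- x * (0 + -1 * \<xi>)) \<partial>lborel)"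
    unfolding ift_def by (rule lborel_integral_real_affine) simp
  also have "\<dots> = ift x"
    unfolding ift_def by (simp add: symmetric)
  finally show ?thesis by (simp add: complex_eq_iff)
qed

lemma schw_of_eq_Re_ift: "S x = Re (ift x) / (2 * pi)"
  unfolding schw_of_def inv_fourier_def ift_def[symmetric] by (simp add: Re_divide_of_real)

lemma of_real_schw_of: "complex_of_real (S x) = ift x / complex_of_real (2 * pi)"
  by (subst ift_real) (simp add: schw_of_eq_Re_ift)

lemma schw_of_zero_pos: "S 0 > 0"
  using h_integral_pos by (simp add: schw_of_eq_Re_ift ift_def)

lemma abs_schw_of_le: "\<bar>S x\<bar> \<le> S 0"
proof -
  have "\<bar>Re (ift x)\<bar> \<le> norm (ift x)"
    by (rule abs_Re_le_cmod)
  also have "\<dots> \<le> (\<integral>\<xi>. norm (complex_of_real (h \<xi>) * cis (x * \<xi>)) \<partial>lborel)"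
    unfolding ift_def by (rule integral_norm_bound)
  also have "\<dots> = Re (ift 0)"
    using bounds by (simp add: ift_def norm_mult)
  finally show ?thesis by (simp add: schw_of_eq_Re_ift divide_right_mono abs_divide)
qed

lemma schw_of_lipschitz: "\<bar>S x - S y\<bar> \<le> S 0 * \<bar>x - y\<bar>"
proof -
  let ?g = "\<lambda>x \<xi>. complex_of_real (h \<xi>) * cis (x * \<xi>)"
  have pointwise: "norm (?g x \<xi> - ?g y \<xi>) \<le> h \<xi> * \<bar>x - y\<bar>" for \<xi>
  proof (cases "\<bar>\<xi>\<bar> \<ge> 1")
    case False
    have "cmod (cis (x * \<xi>) - cis (y * \<xi>)) \<le> \<bar>x - y\<bar> * \<bar>\<xi>\<bar>"
      using norm_cis_diff_le[of "x * \<xi>" "y * \<xi>"] by (simp add: abs_mult flip: left_diff_distrib)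
    also have "\<dots> \<le> \<bar>x - y\<bar>"
      using False by (simp add: mult_left_le)
    finally show ?thesis
      using bounds[of \<xi>] by (simp add: norm_mult mult_left_mono flip: right_diff_distrib)
  qed (use zero_outside[of \<xi>] in simp)
  have "\<bar>Re (ift x) - Re (ift y)\<bar> \<le> norm (ift x - ift y)"
    by (metis abs_Re_le_cmod minus_complex.sel(1))
  also have "ift x - ift y = (\<integral>\<xi>. ?g x \<xi> - ?g y \<xi> \<partial>lborel)"
    unfolding ift_def by (rule Bochner_Integration.integral_diff[OF ift_integrable ift_integrable, symmetric])
  also have "norm \<dots> \<le> (\<integral>\<xi>. norm (?g x \<xi> - ?g y \<xi>) \<partial>lborel)"
    by (rule integral_norm_bound)
  also have "\<dots> \<le> (\<integral>\<xi>. h \<xi> * \<bar>x - y\<bar> \<partial>lborel)"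
    using pointwise
    by (intro integral_mono integrable_norm Bochner_Integration.integrable_diff ift_integrable
        integrable_mult_left h_integrable)
  also have "\<dots> = Re (ift 0) * \<bar>x - y\<bar>"
    by (simp add: ift_def)
  finally show ?thesis
    by (simp add: schw_of_eq_Re_ift abs_divide divide_right_mono flip: diff_divide_distrib)
qed

lemma schw_of_continuous_on [continuous_intros]: "continuous_on A S"
proof -
  have "(S 0)-lipschitz_on A S"
    using schw_of_zero_pos by (intro lipschitz_onI) (auto simp: dist_real_def schw_of_lipschitz)
  then show ?thesis by (rule lipschitz_on_continuous_on)
qed

lemma schw_of_borel [measurable]: "S \<in> borel_measurable borel"
  by (intro borel_measurable_continuous_onI schw_of_continuous_on)

lemma deriv_h_eq_zero:
  assumes "\<bar>\<xi>\<bar> > 1"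
  shows "deriv h \<xi> = 0"
proof -
  have "(h has_real_derivative 0) (at \<xi>)"
  proof (rule has_field_derivative_transform_within_open[where S = "- {-1..1}"])
    show "\<And>x. x \<in> - {- 1..1} \<Longrightarrow> 0 = h x"
      using zero_outside by fastforce
  qed (use assms in auto)
  then show ?thesis by (rule DERIV_imp_deriv)
qed

lemma cos_integral_by_parts:
  assumes "x \<noteq> 0"
  shows "((\<lambda>\<eta>. h \<eta> * cos (x * \<eta>) + deriv (deriv h) \<eta> * cos (x * \<eta>) / x\<^sup>2) has_integral 0) {-2..2}"
proof -
  define F where "F \<eta> = h \<eta> * sin (x * \<eta>) * (1 / x) + deriv h \<eta> * cos (x * \<eta>) * (1 / x\<^sup>2)" for \<eta>
  have F_deriv: "(F has_real_derivative h \<eta> * cos (x * \<eta>) + deriv (deriv h) \<eta> * cos (x * \<eta>) / x\<^sup>2) (at \<eta>)" for \<eta>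
  proof -
    have lin: "((\<lambda>\<eta>. x * \<eta>) has_real_derivative x) (at \<eta>)"
      using DERIV_cmult[where c = x, OF DERIV_ident] by simp
    have "((\<lambda>\<eta>. h \<eta> * sin (x * \<eta>)) has_real_derivative
        deriv h \<eta> * sin (x * \<eta>) + cos (x * \<eta>) * x * h \<eta>) (at \<eta>)"
      by (rule DERIV_mult[OF smooth_fun_DERIV[OF smooth, where k = 0, simplified] DERIV_fun_sin[OF lin]])
    moreover have "((\<lambda>\<eta>. deriv h \<eta> * cos (x * \<eta>)) has_real_derivative
        deriv (deriv h) \<eta> * cos (x * \<eta>) + - sin (x * \<eta>) * x * deriv h \<eta>) (at \<eta>)"
      by (rule DERIV_mult[OF smooth_fun_DERIV[OF smooth, where k = 1, simplified] DERIV_fun_cos[OF lin]])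
    ultimately have "(F has_real_derivative
        (deriv h \<eta> * sin (x * \<eta>) + cos (x * \<eta>) * x * h \<eta>) * (1 / x)
        + (deriv (deriv h) \<eta> * cos (x * \<eta>) + - sin (x * \<eta>) * x * deriv h \<eta>) * (1 / x\<^sup>2)) (at \<eta>)"
      unfolding F_def by (intro DERIV_add DERIV_cmult_right)
    then show ?thesis
      by (rule DERIV_cong) (use assms in \<open>simp add: field_simps power2_eq_square\<close>)
  qed
  have "((\<lambda>\<eta>. h \<eta> * cos (x * \<eta>) + deriv (deriv h) \<eta> * cos (x * \<eta>) / x\<^sup>2) has_integral F 2 - F (-2)) {-2..2}"
    by (intro fundamental_theorem_of_calculus)
      (auto intro!: has_vector_derivative_at_within DERIV_subset[OF F_deriv]
        simp flip: has_real_derivative_iff_has_vector_derivative)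
  moreover have "F 2 = 0" "F (-2) = 0"
    unfolding F_def using zero_outside[of 2] zero_outside[of "-2"] deriv_h_eq_zero[of 2] deriv_h_eq_zero[of "-2"]
    by auto
  ultimately show ?thesis by simp
qed

lemma Re_ift_eq_integral: "Re (ift x) = integral {-2..2} (\<lambda>\<eta>. h \<eta> * cos (x * \<eta>))"
proof -
  have integrable: "integrable lborel (\<lambda>\<eta>. h \<eta> * cos (x * \<eta>))"
    by (rule Bochner_Integration.integrable_bound[OF h_integrable])
      (auto intro!: borel_measurable_continuous_onI continuous_intros simp: abs_mult mult_left_le bounds)
  have "Re (ift x) = (\<integral>\<eta>. h \<eta> * cos (x * \<eta>) \<partial>lborel)"
    unfolding ift_def by (subst integral_Re[symmetric, OF ift_integrable]) simp
  moreover have "(\<lambda>\<eta>. if \<eta> \<in> {-2..2} then h \<eta> * cos (x * \<eta>) else 0) = (\<lambda>\<eta>. h \<eta> * cos (x * \<eta>))"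
    using zero_outside by (force simp: fun_eq_iff)
  then have "((\<lambda>\<eta>. h \<eta> * cos (x * \<eta>)) has_integral (\<integral>\<eta>. h \<eta> * cos (x * \<eta>) \<partial>lborel)) {-2..2}"
    using has_integral_integral_lborel[OF integrable] by (simp flip: has_integral_restrict_UNIV[of "{-2..2}"])
  ultimately show ?thesis
    by (simp add: integral_unique)
qed

lemma deriv2_h_continuous_on [continuous_intros]: "continuous_on A (deriv (deriv h))"
  using smooth_fun_isCont[OF smooth, where k = 2]
  by (simp add: continuous_at_imp_continuous_on numeral_2_eq_2)

lemma Re_ift_decay:
  obtains B where "B > 0" "\<And>x. x \<noteq> 0 \<Longrightarrow> \<bar>Re (ift x)\<bar> \<le> 4 * B / x\<^sup>2"
proof -
  have "compact (deriv (deriv h) ` {-2..2})"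
    by (intro compact_continuous_image continuous_intros) auto
  then obtain B where B: "B > 0" "\<And>\<eta>. \<eta> \<in> {-2..2} \<Longrightarrow> \<bar>deriv (deriv h) \<eta>\<bar> \<le> B"
    using compact_imp_bounded bounded_pos by (metis image_eqI real_norm_def)
  show ?thesis
  proof (rule that[OF B(1)])
    fix x :: real
    assume x: "x \<noteq> 0"
    let ?f = "\<lambda>\<eta>. h \<eta> * cos (x * \<eta>)"
    let ?g = "\<lambda>\<eta>. deriv (deriv h) \<eta> * cos (x * \<eta>) / x\<^sup>2"
    have "?f integrable_on {-2..2}" "?g integrable_on {-2..2}"
      by (intro integrable_continuous_interval continuous_intros; use x in simp)+
    then have "Re (ift x) = - integral {-2..2} ?g"
      using integral_add[of ?f "{-2..2}" ?g] cos_integral_by_parts[OF x]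
      by (simp add: Re_ift_eq_integral integral_unique eq_neg_iff_add_eq_0)
    moreover have "norm (integral {-2..2} ?g) \<le> B / x\<^sup>2 * (2 - (-2))"
    proof (rule integral_bound)
      show "continuous_on {-2..2} ?g"
        by (intro continuous_intros) (use x in simp)
      show "norm (?g \<eta>) \<le> B / x\<^sup>2" if "\<eta> \<in> {-2..2}" for \<eta>
      proof -
        have "\<bar>deriv (deriv h) \<eta> * cos (x * \<eta>)\<bar> \<le> B"
          using B(2)[of \<eta>] that abs_cos_le_one[of "x * \<eta>"] unfolding abs_mult
          by (intro mult_right_le_one_le[THEN order_trans]) auto
        then show ?thesis by (simp add: abs_divide divide_right_mono)
      qed
    qed simp
    ultimately show "\<bar>Re (ift x)\<bar> \<le> 4 * B / x\<^sup>2"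
      by (simp add: mult.commute)
  qed
qed

lemma schw_of_decay:
  obtains C where "\<And>x. \<bar>S x\<bar> \<le> C * inverse (1 + x\<^sup>2)"
proof -
  obtain B where B: "B > 0" "\<And>x. x \<noteq> 0 \<Longrightarrow> \<bar>Re (ift x)\<bar> \<le> 4 * B / x\<^sup>2"
    using Re_ift_decay by blast
  have "\<bar>S x\<bar> * (1 + x\<^sup>2) \<le> 2 * S 0 + 4 * B / pi" for x
  proof (cases "\<bar>x\<bar> \<le> 1")
    case True
    then have "\<bar>S x\<bar> * (1 + x\<^sup>2) \<le> S 0 * 2"
      using abs_schw_of_le[of x] abs_square_le_1[of x] by (intro mult_mono) auto
    moreover have "0 \<le> 4 * B / pi"
      using B(1) by simp
    ultimately show ?thesis by linarith
  next
    case False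
    then have x: "x \<noteq> 0" "1 \<le> x\<^sup>2"
      using abs_square_less_1[of x] by auto
    have "\<bar>S x\<bar> = \<bar>Re (ift x)\<bar> / (2 * pi)"
      by (simp add: schw_of_eq_Re_ift abs_divide)
    also have "\<dots> \<le> 4 * B / x\<^sup>2 / (2 * pi)"
      using B(2)[OF x(1)] by (rule divide_right_mono) simp
    finally have "\<bar>S x\<bar> * (1 + x\<^sup>2) \<le> 4 * B / x\<^sup>2 / (2 * pi) * (2 * x\<^sup>2)"
      using x(2) by (intro mult_mono) auto
    also have "\<dots> = 4 * B / pi"
      using x(1) by (simp add: field_simps)
    finally show ?thesis
      using schw_of_zero_pos by simp
  qed
  moreover have "1 + x\<^sup>2 > 0" for x :: real
    by (simp add: add_pos_nonneg)
  ultimately show ?thesis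
    by (intro that[of "2 * S 0 + 4 * B / pi"]) (simp add: divide_inverse[symmetric] pos_le_divide_eq)
qed

lemma schw_of_integrable: "integrable lborel S"
proof -
  obtain C where C: "\<And>x. \<bar>S x\<bar> \<le> C * inverse (1 + x\<^sup>2)"
    using schw_of_decay by blast
  have "integrable lborel (\<lambda>x::real. inverse (1 + x\<^sup>2))"
    using integrable_inverse_1_plus_square by (simp add: set_integrable_def einterval_def)
  then have "integrable lborel (\<lambda>x::real. C * inverse (1 + x\<^sup>2))"
    by simp
  then show ?thesis
    by (rule Bochner_Integration.integrable_bound) (auto intro: order_trans[OF C abs_ge_self])
qed

lemma ift_gaussian_integrable:
  assumes "\<sigma> \<noteq> 0"
  shows "integrable (lborel \<Otimes>\<^sub>M lborel)
    (\<lambda>(x, \<eta>). complex_of_real (h \<eta>) * cis (x * \<eta>) * (complex_of_real (exp (- (\<sigma> * x)\<^sup>2 / 2)) * cis (- (x * \<xi>))))"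
    (is "integrable _ (\<lambda>(x, \<eta>). ?F x \<eta>)")
proof (rule lborel_pair.Fubini_integrable)
  show "(\<lambda>(x, \<eta>). ?F x \<eta>) \<in> borel_measurable (lborel \<Otimes>\<^sub>M lborel)"
    by measurable
  have "(\<lambda>\<eta>. norm (?F x \<eta>)) = (\<lambda>\<eta>. exp (- (\<sigma> * x)\<^sup>2 / 2) * h \<eta>)" for x
    using bounds by (auto simp: norm_mult)
  then show "integrable lborel (\<lambda>x. \<integral>\<eta>. norm (case (x, \<eta>) of (x, \<eta>) \<Rightarrow> ?F x \<eta>) \<partial>lborel)"
    using integrable_gaussian[OF assms] by simp
  show "AE x in lborel. integrable lborel (\<lambda>\<eta>. case (x, \<eta>) of (x, \<eta>) \<Rightarrow> ?F x \<eta>)"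
    by (auto intro!: integrable_mult_left ift_integrable)
qed

text \<open>Fourier inversion is proved by Gaussian regularisation: Fubini turns the regularised
  Fourier transform of \<open>S\<close> into a Gaussian mollification of \<open>h\<close>.\<close>

lemma fourier_gaussian_regularized:
  assumes "\<sigma> > 0"
  shows "(\<integral>x. complex_of_real (S x) * complex_of_real (exp (- (\<sigma> * x)\<^sup>2 / 2)) * cis (- (x * \<xi>)) \<partial>lborel)
       = complex_of_real (\<integral>z. h (\<xi> + \<sigma> * z) * std_normal_density z \<partial>lborel)"
proof -
  define F where "F x \<eta> = complex_of_real (h \<eta>) * cis (x * \<eta>)
    * (complex_of_real (exp (- (\<sigma> * x)\<^sup>2 / 2)) * cis (- (x * \<xi>)))" for x \<eta>
  have inner: "(\<integral>x. F x \<eta> \<partial>lborel)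
      = complex_of_real (2 * pi) * complex_of_real (h \<eta> * std_normal_density ((\<eta> - \<xi>) / \<sigma>) / \<sigma>)" for \<eta>
  proof -
    have "(\<lambda>x. F x \<eta>) = (\<lambda>x. complex_of_real (h \<eta>) * (complex_of_real (exp (- (\<sigma> * x)\<^sup>2 / 2)) * cis (x * (\<eta> - \<xi>))))"
      unfolding F_def by (auto simp: fun_eq_iff cis_mult right_diff_distrib)
    then show ?thesis
      using fourier_gaussian[OF assms, of "\<eta> - \<xi>"] by simp
  qed
  have "(\<integral>x. complex_of_real (S x) * complex_of_real (exp (- (\<sigma> * x)\<^sup>2 / 2)) * cis (- (x * \<xi>)) \<partial>lborel)
      = (\<integral>x. (\<integral>\<eta>. F x \<eta> \<partial>lborel) / complex_of_real (2 * pi) \<partial>lborel)"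
  proof (rule Bochner_Integration.integral_cong[OF refl])
    fix x
    have "(\<integral>\<eta>. F x \<eta> \<partial>lborel) = ift x * (complex_of_real (exp (- (\<sigma> * x)\<^sup>2 / 2)) * cis (- (x * \<xi>)))"
      unfolding F_def ift_def by (rule integral_mult_left_zero)
    then show "complex_of_real (S x) * complex_of_real (exp (- (\<sigma> * x)\<^sup>2 / 2)) * cis (- (x * \<xi>))
        = (\<integral>\<eta>. F x \<eta> \<partial>lborel) / complex_of_real (2 * pi)"
      by (simp add: of_real_schw_of)
  qed
  also have "\<dots> = (\<integral>x. (\<integral>\<eta>. F x \<eta> \<partial>lborel) \<partial>lborel) / complex_of_real (2 * pi)"
    by (rule integral_divide_zero)
  also have "(\<integral>x. (\<integral>\<eta>. F x \<eta> \<partial>lborel) \<partial>lborel) = (\<integral>\<eta>. (\<integral>x. F x \<eta> \<partial>lborel) \<partial>lborel)"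
    unfolding F_def by (rule lborel_pair.Fubini_integral[OF ift_gaussian_integrable, symmetric]) (use assms in simp)
  also have "\<dots> / complex_of_real (2 * pi) = (\<integral>\<eta>. complex_of_real (h \<eta> * std_normal_density ((\<eta> - \<xi>) / \<sigma>) / \<sigma>) \<partial>lborel)"
    by (simp only: inner integral_mult_right_zero) simp
  also have "\<dots> = complex_of_real (\<integral>\<eta>. h \<eta> * std_normal_density ((\<eta> - \<xi>) / \<sigma>) / \<sigma> \<partial>lborel)"
    by (rule integral_complex_of_real)
  also have "(\<integral>\<eta>. h \<eta> * std_normal_density ((\<eta> - \<xi>) / \<sigma>) / \<sigma> \<partial>lborel)
      = \<bar>\<sigma>\<bar> *\<^sub>R (\<integral>z. h (\<xi> + \<sigma> * z) * std_normal_density ((\<xi> + \<sigma> * z - \<xi>) / \<sigma>) / \<sigma> \<partial>lborel)"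
    by (rule lborel_integral_real_affine) (use assms in simp)
  also have "\<dots> = (\<integral>z. h (\<xi> + \<sigma> * z) * std_normal_density z \<partial>lborel)"
    using assms by simp
  finally show ?thesis .
qed

lemma tendsto_fourier_gaussian_regularized:
  assumes "\<sigma> \<longlonglongrightarrow> 0"
  shows "(\<lambda>k. \<integral>x. complex_of_real (S x) * complex_of_real (exp (- (\<sigma> k * x)\<^sup>2 / 2)) * cis (- (x * \<xi>)) \<partial>lborel)
    \<longlonglongrightarrow> fourier (\<lambda>x. complex_of_real (S x)) \<xi>"
  unfolding fourier_def
proof (rule integral_dominated_convergence[where w = "\<lambda>x. \<bar>S x\<bar>"])
  show "integrable lborel (\<lambda>x. \<bar>S x\<bar>)"
    by (intro integrable_abs schw_of_integrable)
  show "AE x in lborel. (\<lambda>k. complex_of_real (S x) * complex_of_real (exp (- (\<sigma> k * x)\<^sup>2 / 2)) * cis (- (x * \<xi>)))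
      \<longlonglongrightarrow> complex_of_real (S x) * cis (- (x * \<xi>))"
    using assms by (auto intro!: AE_I2 tendsto_eq_intros)
  show "AE x in lborel. norm (complex_of_real (S x) * complex_of_real (exp (- (\<sigma> k * x)\<^sup>2 / 2)) * cis (- (x * \<xi>)))
      \<le> \<bar>S x\<bar>" for k
    by (auto intro!: AE_I2 simp: norm_mult mult_left_le)
qed measurable

lemma tendsto_gaussian_mollified:
  assumes "\<sigma> \<longlonglongrightarrow> 0"
  shows "(\<lambda>k. \<integral>z. h (\<xi> + \<sigma> k * z) * std_normal_density z \<partial>lborel) \<longlonglongrightarrow> h \<xi>"
proof -
  have "(\<lambda>k. \<integral>z. h (\<xi> + \<sigma> k * z) * std_normal_density z \<partial>lborel)
      \<longlonglongrightarrow> (\<integral>z. h \<xi> * std_normal_density z \<partial>lborel)"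
  proof (rule integral_dominated_convergence[where w = std_normal_density])
    show "AE z in lborel. (\<lambda>k. h (\<xi> + \<sigma> k * z) * std_normal_density z) \<longlonglongrightarrow> h \<xi> * std_normal_density z"
    proof (intro AE_I2 tendsto_mult_right)
      fix z
      have "(\<lambda>k. \<xi> + \<sigma> k * z) \<longlonglongrightarrow> \<xi> + 0 * z"
        by (intro tendsto_intros assms)
      then have "(\<lambda>k. \<xi> + \<sigma> k * z) \<longlonglongrightarrow> \<xi>"
        by simp
      then show "(\<lambda>k. h (\<xi> + \<sigma> k * z)) \<longlonglongrightarrow> h \<xi>"
        by (rule isCont_tendsto_compose[OF h_isCont])
    qed
    show "AE z in lborel. norm (h (\<xi> + \<sigma> k * z) * std_normal_density z) \<le> std_normal_density z" for k
      using bounds by (auto intro!: AE_I2 simp: abs_mult mult_left_le_one_le)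
  qed auto
  then show ?thesis by simp
qed

theorem fourier_schw_of: "fourier (\<lambda>x. complex_of_real (S x)) \<xi> = complex_of_real (h \<xi>)"
proof -
  define \<sigma> where "\<sigma> k = inverse (real (Suc k))" for k
  have \<sigma>: "\<sigma> \<longlonglongrightarrow> 0"
    unfolding \<sigma>_def by (rule LIMSEQ_inverse_real_of_nat)
  have "(\<integral>x. complex_of_real (S x) * complex_of_real (exp (- (\<sigma> k * x)\<^sup>2 / 2)) * cis (- (x * \<xi>)) \<partial>lborel)
      = complex_of_real (\<integral>z. h (\<xi> + \<sigma> k * z) * std_normal_density z \<partial>lborel)" for k
    by (rule fourier_gaussian_regularized) (simp add: \<sigma>_def)
  then have "(\<lambda>k. complex_of_real (\<integral>z. h (\<xi> + \<sigma> k * z) * std_normal_density z \<partial>lborel))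
      \<longlonglongrightarrow> fourier (\<lambda>x. complex_of_real (S x)) \<xi>"
    using tendsto_fourier_gaussian_regularized[OF \<sigma>, where \<xi> = \<xi>] by simp
  moreover have "(\<lambda>k. complex_of_real (\<integral>z. h (\<xi> + \<sigma> k * z) * std_normal_density z \<partial>lborel))
      \<longlonglongrightarrow> complex_of_real (h \<xi>)"
    by (intro tendsto_of_real tendsto_gaussian_mollified \<sigma>)
  ultimately show ?thesis
    using LIMSEQ_unique by blast
qed

lemma schw_of_cis_integrable: "integrable lborel (\<lambda>x. complex_of_real (S x) * cis (- (x * \<xi>)))"
  by (rule Bochner_Integration.integrable_bound[OF schw_of_integrable]) (auto simp: norm_mult)

lemma fourier_schw_of_cos:
  "(\<integral>x. complex_of_real (S x * cos (\<omega> * x)) * cis (- (x * \<xi>)) \<partial>lborel)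
    = complex_of_real ((h (\<xi> - \<omega>) + h (\<xi> + \<omega>)) / 2)"
proof -
  have pointwise: "complex_of_real (S x * cos (\<omega> * x)) * cis (- (x * \<xi>))
      = (complex_of_real (S x) * cis (- (x * (\<xi> - \<omega>))) + complex_of_real (S x) * cis (- (x * (\<xi> + \<omega>)))) / 2" for x
  proof -
    have "complex_of_real (cos (\<omega> * x)) = (cis (\<omega> * x) + cis (- (\<omega> * x))) / 2"
      by (simp add: complex_eq_iff)
    then show ?thesis
      by (simp add: algebra_simps add_divide_distrib cis_mult)
  qed
  have "(\<integral>x. complex_of_real (S x * cos (\<omega> * x)) * cis (- (x * \<xi>)) \<partial>lborel)
      = (fourier (\<lambda>x. complex_of_real (S x)) (\<xi> - \<omega>) + fourier (\<lambda>x. complex_of_real (S x)) (\<xi> + \<omega>)) / 2"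
    unfolding fourier_def pointwise integral_divide_zero
    by (simp only: Bochner_Integration.integral_add[OF schw_of_cis_integrable schw_of_cis_integrable])
  then show ?thesis
    by (simp add: fourier_schw_of)
qed

lemma ift_translate:
  "(\<integral>\<xi>. complex_of_real (h (\<xi> + t)) * cis (x * \<xi>) \<partial>lborel) = cis (- (x * t)) * ift x"
proof -
  have "ift x = \<bar>1\<bar> *\<^sub>R (\<integral>\<xi>. complex_of_real (h (t + 1 * \<xi>)) * cis (x * (t + 1 * \<xi>)) \<partial>lborel)"
    unfolding ift_def by (rule lborel_integral_real_affine) simp
  also have "\<dots> = (\<integral>\<xi>. cis (x * t) * (complex_of_real (h (\<xi> + t)) * cis (x * \<xi>)) \<partial>lborel)"
  proof -
    have "cis (x * (t + 1 * \<xi>)) = cis (x * t) * cis (x * \<xi>)" for \<xi>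
      by (simp add: cis_mult distrib_left)
    then show ?thesis
      by (simp add: add.commute mult.left_commute)
  qed
  also have "\<dots> = cis (x * t) * (\<integral>\<xi>. complex_of_real (h (\<xi> + t)) * cis (x * \<xi>) \<partial>lborel)"
    by (rule integral_mult_right_zero)
  finally show ?thesis
    by (simp add: cis_mult)
qed

lemma inv_fourier_modulation:
  "inv_fourier (\<lambda>\<xi>. complex_of_real ((h (\<xi> - \<omega>) + h (\<xi> + \<omega>)) / 2)) x = complex_of_real (S x * cos (\<omega> * x))"
proof -
  have translate_integrable: "integrable lborel (\<lambda>\<xi>. complex_of_real (h (\<xi> + t)) * cis (x * \<xi>))" for t
  proof -
    have "integrable lborel (\<lambda>\<xi>. h (t + 1 * \<xi>))"
      by (rule lborel_integrable_real_affine[OF h_integrable]) simp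
    then have "integrable lborel (\<lambda>\<xi>. h (\<xi> + t))"
      by (simp add: add.commute)
    then show ?thesis
      by (rule Bochner_Integration.integrable_bound)
        (auto intro!: borel_measurable_continuous_onI continuous_intros simp: norm_mult)
  qed
  have pointwise: "complex_of_real ((h (\<xi> - \<omega>) + h (\<xi> + \<omega>)) / 2) * cis (x * \<xi>)
      = (complex_of_real (h (\<xi> + - \<omega>)) * cis (x * \<xi>) + complex_of_real (h (\<xi> + \<omega>)) * cis (x * \<xi>)) / 2" for \<xi>
    by (simp add: algebra_simps add_divide_distrib)
  have "(\<integral>\<xi>. complex_of_real ((h (\<xi> - \<omega>) + h (\<xi> + \<omega>)) / 2) * cis (x * \<xi>) \<partial>lborel)
      = ((\<integral>\<xi>. complex_of_real (h (\<xi> + - \<omega>)) * cis (x * \<xi>) \<partial>lborel)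
        + (\<integral>\<xi>. complex_of_real (h (\<xi> + \<omega>)) * cis (x * \<xi>) \<partial>lborel)) / 2"
    unfolding pointwise integral_divide_zero
    by (simp only: Bochner_Integration.integral_add[OF translate_integrable translate_integrable])
  also have "\<dots> = (cis (x * \<omega>) + cis (- (x * \<omega>))) / 2 * ift x"
    unfolding ift_translate by (simp add: algebra_simps add_divide_distrib)
  also have "(cis (x * \<omega>) + cis (- (x * \<omega>))) / 2 = complex_of_real (cos (\<omega> * x))"
    by (simp add: complex_eq_iff mult.commute)
  finally show ?thesis
    unfolding inv_fourier_def by (simp add: of_real_schw_of)
qed

end

section \<open>The Littlewood--Paley blocks of the initial data\<close>

definition ampl :: "real \<Rightarrow> nat \<Rightarrow> real" where
  "ampl s j = 2 powr (- real (j + 3) * s)"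

definition freq :: "nat \<Rightarrow> real" where
  "freq j = 11 / 8 * 2 ^ (j + 3)"

lemma ampl_pos: "ampl s j > 0"
  by (simp add: ampl_def)

lemma freq_pos: "freq j > 0"
  by (simp add: freq_def)

lemma ampl_eq_power: "ampl s j = (2 powr (- s)) ^ (j + 3)"
proof -
  have "(2 powr (- s)) ^ (j + 3) = (2 powr (- s)) powr real (j + 3)"
    by (rule powr_realpow[symmetric]) simp
  also have "\<dots> = 2 powr (- real (j + 3) * s)"
    by (simp add: powr_powr algebra_simps)
  finally show ?thesis
    by (simp add: ampl_def)
qed

lemma summable_ampl:
  assumes "s > 0"
  shows "summable (ampl s)"
proof -
  have "ampl s = (\<lambda>j. (2 powr (- s)) ^ j * (2 powr (- s)) ^ 3)"
    by (simp add: fun_eq_iff ampl_eq_power power_add)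
  moreover have "summable (\<lambda>j. (2 powr (- s)) ^ j * (2 powr (- s)) ^ 3)"
    using assms powr_less_cancel_iff[of 2 "- s" 0] by (intro summable_mult2 summable_geometric) simp
  ultimately show ?thesis by simp
qed

lemma summable_ampl_freq:
  assumes "s > 1"
  shows "summable (\<lambda>j. ampl s j * freq j)"
proof -
  have "2 powr (1 - s) = 2 * 2 powr (- s)"
    by (simp add: powr_diff powr_minus divide_inverse)
  then have "(\<lambda>j. ampl s j * freq j) = (\<lambda>j. 11 / 8 * ((2 powr (1 - s)) ^ j * (2 powr (1 - s)) ^ 3))"
    by (simp add: fun_eq_iff ampl_eq_power freq_def power_mult_distrib power_add mult_ac)
  moreover have "summable (\<lambda>j. 11 / 8 * ((2 powr (1 - s)) ^ j * (2 powr (1 - s)) ^ 3))"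
    using assms powr_less_cancel_iff[of 2 "1 - s" 0]
    by (intro summable_mult summable_mult2 summable_geometric) simp
  ultimately show ?thesis by (simp only:)
qed

lemma gam_gt_4:
  assumes "s > 1"
  shows "gam s > 4"
proof -
  have "2 powr (2 * s) > 2 powr 2" "2 powr s > 2 powr 1"
    using assms by (simp_all only: powr_less_cancel_iff)
  then have "4 * 1 < 2 powr (2 * s) * (2 powr s - 1)"
    by (intro mult_strict_mono) auto
  then show ?thesis by (simp add: gam_def)
qed

lemma LP_block_of_nat:
  "LP_block th (int n) f = fmult (\<lambda>\<xi>. th (\<xi> / (2 * 2 ^ n)) - th (\<xi> / 2 ^ n)) f"
  by (simp add: LP_block_def lp_varphi_def powr_realpow mult.commute)

locale initial_data = phi: bump \<phi>h "-1/4" "1/4" + psi: bump \<psi>h "1/2" "5/8" for \<phi>h \<psi>h +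
  fixes th :: "real \<Rightarrow> real" and s :: real
  assumes th_zero: "\<And>\<xi>. \<bar>\<xi>\<bar> > 4/3 \<Longrightarrow> th \<xi> = 0"
    and th_one: "\<And>\<xi>. \<bar>\<xi>\<bar> \<le> 3/4 \<Longrightarrow> th \<xi> = 1"
    and phi_zero: "\<And>\<xi>. \<bar>\<xi>\<bar> \<ge> 1/2 \<Longrightarrow> \<phi>h \<xi> = 0"
    and psi_zero: "\<And>\<xi>. \<bar>\<xi>\<bar> \<ge> 3/4 \<Longrightarrow> \<psi>h \<xi> = 0"
    and s_gt_1: "s > 1"
begin

lemma gam_pos: "gam s > 0"
  using gam_gt_4[OF s_gt_1] by simp

definition phi_scale :: real where
  "phi_scale = gam s / schw_of \<phi>h 0"

lemma phi_scale_pos: "phi_scale > 0"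
  using gam_pos phi.schw_of_zero_pos by (simp add: phi_scale_def)

lemma phi_tilde_eq: "phi_tilde \<phi>h s x = phi_scale * schw_of \<phi>h x"
  by (simp add: phi_tilde_def phi_scale_def)

lemma abs_phi_tilde_le: "\<bar>phi_tilde \<phi>h s x\<bar> \<le> gam s"
proof -
  have "\<bar>phi_tilde \<phi>h s x\<bar> \<le> phi_scale * schw_of \<phi>h 0"
    using phi.abs_schw_of_le phi_scale_pos by (simp add: phi_tilde_eq abs_mult)
  then show ?thesis
    using phi.schw_of_zero_pos by (simp add: phi_scale_def)
qed

lemma phi_tilde_lipschitz: "\<bar>phi_tilde \<phi>h s x - phi_tilde \<phi>h s y\<bar> \<le> gam s * \<bar>x - y\<bar>"
proof -
  have "\<bar>phi_tilde \<phi>h s x - phi_tilde \<phi>h s y\<bar> \<le> phi_scale * (schw_of \<phi>h 0 * \<bar>x - y\<bar>)"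
    using phi.schw_of_lipschitz phi_scale_pos
    by (simp add: phi_tilde_eq abs_mult flip: right_diff_distrib)
  then show ?thesis
    using phi.schw_of_zero_pos by (simp add: phi_scale_def)
qed

lemma phi_tilde_ge_half:
  assumes "schw_of \<phi>h x \<ge> schw_of \<phi>h 0 / 2"
  shows "phi_tilde \<phi>h s x \<ge> gam s / 2"
  using assms phi_scale_pos phi.schw_of_zero_pos
  by (simp add: phi_tilde_eq phi_scale_def field_simps)

definition u0_term :: "nat \<Rightarrow> real \<Rightarrow> real" where
  "u0_term j x = ampl s j * phi_tilde \<phi>h s x * cos (freq j * x)"

lemma u0_eq_suminf: "u0 \<phi>h s x = (\<Sum>j. u0_term j x)"
  unfolding u0_def u0_term_def ampl_def freq_def ..

lemma u0_term_eq: "u0_term j x = ampl s j * phi_scale * (schw_of \<phi>h x * cos (freq j * x))"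
  by (simp add: u0_term_def phi_tilde_eq)

lemma abs_u0_term_le: "\<bar>u0_term j x\<bar> \<le> ampl s j * gam s"
proof -
  have "\<bar>phi_tilde \<phi>h s x * cos (freq j * x)\<bar> \<le> gam s"
    using abs_phi_tilde_le[of x] abs_cos_le_one[of "freq j * x"] gam_pos unfolding abs_mult
    by (intro mult_right_le_one_le[THEN order_trans]) auto
  then show ?thesis
    using ampl_pos[of s j] by (simp add: u0_term_def abs_mult mult.assoc)
qed

lemma summable_ampl_gam: "summable (\<lambda>j. ampl s j * gam s)"
  using s_gt_1 by (intro summable_mult2 summable_ampl) simp

lemma summable_u0_term: "summable (\<lambda>j. u0_term j x)"
  by (rule summable_comparison_test'[OF summable_ampl_gam]) (simp add: abs_u0_term_le)

definition u0_sup :: real where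
  "u0_sup = gam s * (\<Sum>j. ampl s j)"

lemma abs_u0_le: "\<bar>u0 \<phi>h s x\<bar> \<le> u0_sup"
proof -
  have "\<bar>u0 \<phi>h s x\<bar> \<le> (\<Sum>j. ampl s j * gam s)"
    unfolding u0_eq_suminf by (rule norm_suminf_le[where 'a = real, OF _ summable_ampl_gam, unfolded real_norm_def]) (rule abs_u0_term_le)
  also have "\<dots> = u0_sup"
    using s_gt_1 by (simp add: u0_sup_def suminf_mult[OF summable_ampl] mult.commute)
  finally show ?thesis .
qed

lemma u0_term_lipschitz:
  "\<bar>u0_term j x - u0_term j y\<bar> \<le> gam s * (ampl s j * (1 + freq j)) * \<bar>x - y\<bar>"
proof -
  let ?p = "phi_tilde \<phi>h s" and ?c = "\<lambda>x. cos (freq j * x)"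
  have "\<bar>(?p x - ?p y) * ?c x\<bar> \<le> gam s * \<bar>x - y\<bar>"
    using phi_tilde_lipschitz[of x y] abs_cos_le_one[of "freq j * x"] unfolding abs_mult
    by (intro mult_right_le_one_le[THEN order_trans]) auto
  moreover have "\<bar>?p y * (?c x - ?c y)\<bar> \<le> gam s * (freq j * \<bar>x - y\<bar>)"
  proof -
    have "\<bar>?c x - ?c y\<bar> \<le> freq j * \<bar>x - y\<bar>"
      using abs_cos_diff_le[of "freq j * x" "freq j * y"] freq_pos[of j]
      by (simp add: abs_mult flip: right_diff_distrib)
    then show ?thesis
      unfolding abs_mult using abs_phi_tilde_le[of y] by (intro mult_mono) auto
  qed
  ultimately have "\<bar>(?p x - ?p y) * ?c x + ?p y * (?c x - ?c y)\<bar> \<le> gam s * \<bar>x - y\<bar> + gam s * (freq j * \<bar>x - y\<bar>)"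
    by (rule order_trans[OF abs_triangle_ineq add_mono])
  moreover have "u0_term j x - u0_term j y = ampl s j * ((?p x - ?p y) * ?c x + ?p y * (?c x - ?c y))"
    by (simp add: u0_term_def algebra_simps)
  ultimately have "\<bar>u0_term j x - u0_term j y\<bar> \<le> ampl s j * (gam s * \<bar>x - y\<bar> + gam s * (freq j * \<bar>x - y\<bar>))"
    using ampl_pos[of s j] by (simp add: abs_mult mult_left_mono)
  then show ?thesis
    by (simp add: algebra_simps)
qed

definition u0_lip :: real where
  "u0_lip = gam s * (\<Sum>j. ampl s j * (1 + freq j))"

lemma summable_ampl_one_plus_freq: "summable (\<lambda>j. ampl s j * (1 + freq j))"
  using summable_add[OF summable_ampl summable_ampl_freq[OF s_gt_1]] s_gt_1 by (simp add: distrib_left)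

lemma u0_lip_nonneg: "u0_lip \<ge> 0"
  using gam_pos ampl_pos freq_pos
  by (auto simp: u0_lip_def less_imp_le intro!: mult_nonneg_nonneg suminf_nonneg summable_ampl_one_plus_freq)

lemma u0_lipschitz: "\<bar>u0 \<phi>h s x - u0 \<phi>h s y\<bar> \<le> u0_lip * \<bar>x - y\<bar>"
proof -
  have "\<bar>u0 \<phi>h s x - u0 \<phi>h s y\<bar> = \<bar>\<Sum>j. u0_term j x - u0_term j y\<bar>"
    unfolding u0_eq_suminf by (simp add: suminf_diff[OF summable_u0_term summable_u0_term])
  also have "\<dots> \<le> (\<Sum>j. gam s * (ampl s j * (1 + freq j)) * \<bar>x - y\<bar>)"
    by (rule norm_suminf_le[where 'a = real, unfolded real_norm_def] u0_term_lipschitz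
        summable_mult2 summable_mult summable_ampl_one_plus_freq)+
  also have "\<dots> = u0_lip * \<bar>x - y\<bar>"
    unfolding u0_lip_def
    by (intro sums_unique[symmetric] sums_mult2 sums_mult summable_sums summable_ampl_one_plus_freq)
  finally show ?thesis .
qed

lemma u0_continuous_on [continuous_intros]: "continuous_on A (u0 \<phi>h s)"
proof -
  have "u0_lip-lipschitz_on A (u0 \<phi>h s)"
    by (intro lipschitz_onI) (auto simp: dist_real_def u0_lipschitz u0_lip_nonneg)
  then show ?thesis by (rule lipschitz_on_continuous_on)
qed

lemma u0_borel [measurable]: "u0 \<phi>h s \<in> borel_measurable borel"
  by (intro borel_measurable_continuous_onI u0_continuous_on)

definition u0_term_ft :: "nat \<Rightarrow> real \<Rightarrow> real" where
  "u0_term_ft j \<xi> = ampl s j * phi_scale * ((\<phi>h (\<xi> - freq j) + \<phi>h (\<xi> + freq j)) / 2)"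

lemma abs_u0_term_ft_le: "\<bar>u0_term_ft j \<xi>\<bar> \<le> ampl s j * phi_scale"
proof -
  have "\<bar>(\<phi>h (\<xi> - freq j) + \<phi>h (\<xi> + freq j)) / 2\<bar> \<le> 1"
    using phi.bounds[of "\<xi> - freq j"] phi.bounds[of "\<xi> + freq j"] by auto
  then show ?thesis
    using ampl_pos[of s j] phi_scale_pos by (simp add: u0_term_ft_def abs_mult mult_left_le)
qed

lemma summable_u0_term_ft: "summable (\<lambda>j. u0_term_ft j \<xi>)"
  using s_gt_1 abs_u0_term_ft_le
  by (intro summable_comparison_test'[OF summable_mult2[OF summable_ampl]]) auto

lemma abs_u0_term_le_schw_of: "\<bar>u0_term j x\<bar> \<le> ampl s j * phi_scale * \<bar>schw_of \<phi>h x\<bar>"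
  using ampl_pos[of s j] phi_scale_pos
  by (simp add: u0_term_eq abs_mult mult_left_le)

lemma u0_term_cis_integrable: "integrable lborel (\<lambda>x. complex_of_real (u0_term j x) * cis (- (x * \<xi>)))"
proof (rule Bochner_Integration.integrable_bound)
  show "integrable lborel (\<lambda>x. ampl s j * phi_scale * \<bar>schw_of \<phi>h x\<bar>)"
    by (intro integrable_mult_right integrable_abs phi.schw_of_integrable)
  show "AE x in lborel. norm (complex_of_real (u0_term j x) * cis (- (x * \<xi>)))
      \<le> norm (ampl s j * phi_scale * \<bar>schw_of \<phi>h x\<bar>)"
    using abs_u0_term_le_schw_of ampl_pos[of s j] phi_scale_pos by (auto simp: norm_mult abs_mult)
qed (simp add: u0_term_eq)

lemma summable_integral_norm_u0_term_cis:
  "summable (\<lambda>j. \<integral>x. norm (complex_of_real (u0_term j x) * cis (- (x * \<xi>))) \<partial>lborel)"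
proof (rule summable_comparison_test'[OF summable_mult2[OF summable_ampl]])
  show "0 < s" using s_gt_1 by simp
  fix j
  have "(\<integral>x. norm (complex_of_real (u0_term j x) * cis (- (x * \<xi>))) \<partial>lborel)
      \<le> (\<integral>x. ampl s j * phi_scale * \<bar>schw_of \<phi>h x\<bar> \<partial>lborel)"
    using abs_u0_term_le_schw_of
    by (intro integral_mono integrable_norm u0_term_cis_integrable integrable_mult_right
        integrable_abs phi.schw_of_integrable) (simp add: norm_mult)
  then show "norm (\<integral>x. norm (complex_of_real (u0_term j x) * cis (- (x * \<xi>))) \<partial>lborel)
      \<le> ampl s j * (phi_scale * (\<integral>x. \<bar>schw_of \<phi>h x\<bar> \<partial>lborel))"
    by (simp add: mult.assoc)
qed

lemma summable_norm_u0_term_cis: "summable (\<lambda>j. norm (complex_of_real (u0_term j x) * cis (- (x * \<xi>))))"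
  by (rule summable_comparison_test'[OF summable_ampl_gam]) (simp add: norm_mult abs_u0_term_le)

lemma u0_cis_eq_suminf:
  "complex_of_real (u0 \<phi>h s x) * cis (- (x * \<xi>)) = (\<Sum>j. complex_of_real (u0_term j x) * cis (- (x * \<xi>)))"
proof -
  have "(\<lambda>j. complex_of_real (u0_term j x)) sums complex_of_real (u0 \<phi>h s x)"
    unfolding u0_eq_suminf by (intro sums_of_real summable_sums summable_u0_term)
  then show ?thesis
    by (intro sums_unique sums_mult2)
qed

lemma u0_cis_integrable: "integrable lborel (\<lambda>x. complex_of_real (u0 \<phi>h s x) * cis (- (x * \<xi>)))"
  unfolding u0_cis_eq_suminf
  by (intro integrable_suminf AE_I2 u0_term_cis_integrable summable_norm_u0_term_cis
      summable_integral_norm_u0_term_cis)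

lemma fourier_u0_term:
  "(\<integral>x. complex_of_real (u0_term j x) * cis (- (x * \<xi>)) \<partial>lborel) = complex_of_real (u0_term_ft j \<xi>)"
proof -
  have "(\<lambda>x. complex_of_real (u0_term j x) * cis (- (x * \<xi>)))
      = (\<lambda>x. complex_of_real (ampl s j * phi_scale) * (complex_of_real (schw_of \<phi>h x * cos (freq j * x)) * cis (- (x * \<xi>))))"
    by (simp add: fun_eq_iff u0_term_eq)
  then show ?thesis
    by (simp only: integral_mult_right_zero phi.fourier_schw_of_cos) (simp add: u0_term_ft_def)
qed

lemma fourier_u0: "fourier (\<lambda>x. complex_of_real (u0 \<phi>h s x)) \<xi> = complex_of_real (\<Sum>j. u0_term_ft j \<xi>)"
proof -
  have "fourier (\<lambda>x. complex_of_real (u0 \<phi>h s x)) \<xi>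
      = (\<Sum>j. \<integral>x. complex_of_real (u0_term j x) * cis (- (x * \<xi>)) \<partial>lborel)"
    unfolding fourier_def u0_cis_eq_suminf
    by (intro integral_suminf AE_I2 u0_term_cis_integrable summable_norm_u0_term_cis
        summable_integral_norm_u0_term_cis)
  also have "\<dots> = complex_of_real (\<Sum>j. u0_term_ft j \<xi>)"
    unfolding fourier_u0_term by (intro sums_unique[symmetric] sums_of_real summable_sums summable_u0_term_ft)
  finally show ?thesis .
qed

lemma th_scaled_zero: "P > 0 \<Longrightarrow> \<bar>\<xi>\<bar> > 4/3 * P \<Longrightarrow> th (\<xi> / P) = 0"
  by (intro th_zero) (simp add: abs_divide pos_less_divide_eq)

lemma th_scaled_one: "P > 0 \<Longrightarrow> \<bar>\<xi>\<bar> \<le> 3/4 * P \<Longrightarrow> th (\<xi> / P) = 1"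
  by (intro th_one) (simp add: abs_divide pos_divide_le_eq)

lemma u0_term_ft_support:
  assumes "u0_term_ft j \<xi> \<noteq> 0"
  shows "freq j - 1/2 < \<bar>\<xi>\<bar>" "\<bar>\<xi>\<bar> < freq j + 1/2"
proof -
  from assms have "\<phi>h (\<xi> - freq j) \<noteq> 0 \<or> \<phi>h (\<xi> + freq j) \<noteq> 0"
    by (auto simp: u0_term_ft_def)
  then have "\<bar>\<xi> - freq j\<bar> < 1/2 \<or> \<bar>\<xi> + freq j\<bar> < 1/2"
    using phi_zero by force
  then show "freq j - 1/2 < \<bar>\<xi>\<bar>" "\<bar>\<xi>\<bar> < freq j + 1/2"
    using freq_pos[of j] by (smt (verit))+
qed

lemma LP_multiplier_u0_term_ft:
  assumes "n \<ge> 4"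
  shows "(th (\<xi> / (2 * 2 ^ n)) - th (\<xi> / 2 ^ n)) * u0_term_ft j \<xi> = (if j = n - 3 then u0_term_ft j \<xi> else 0)"
proof (cases "u0_term_ft j \<xi> = 0")
  case False
  note support = u0_term_ft_support[OF False]
  define P :: real where "P = 2 ^ n"
  have P: "P \<ge> 16"
    unfolding P_def using power_increasing[OF assms, of "2::real"] by simp
  consider "j = n - 3" | "j > n - 3" | "j < n - 3" by linarith
  then show ?thesis
  proof cases
    case 1
    then have "freq j = 11/8 * P"
      using assms by (simp add: freq_def P_def)
    then show ?thesis
      using 1 support P th_scaled_zero[of P \<xi>] th_scaled_one[of "2 * P" \<xi>] by (simp add: P_def)
  next
    case 2
    have "(2::real) ^ (n + 1) \<le> 2 ^ (j + 3)"
      using 2 by (intro power_increasing) auto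
    then have "freq j \<ge> 11/4 * P"
      by (simp add: freq_def P_def)
    then show ?thesis
      using 2 support P th_scaled_zero[of P \<xi>] th_scaled_zero[of "2 * P" \<xi>] by (simp add: P_def)
  next
    case 3
    have "(2::real) ^ (j + 4) \<le> 2 ^ n"
      using 3 by (intro power_increasing) auto
    then have "freq j \<le> 11/16 * P"
      by (simp add: freq_def P_def power_add)
    then show ?thesis
      using 3 support P th_scaled_one[of P \<xi>] th_scaled_one[of "2 * P" \<xi>] by (simp add: P_def)
  qed
qed auto

lemma LP_block_u0:
  assumes "n \<ge> 4"
  shows "LP_block th (int n) (u0 \<phi>h s) x = complex_of_real (u0_term (n - 3) x)"
proof -
  let ?m = "\<lambda>\<xi>. th (\<xi> / (2 * 2 ^ n)) - th (\<xi> / 2 ^ n)"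
  have "?m \<xi> * (\<Sum>j. u0_term_ft j \<xi>) = u0_term_ft (n - 3) \<xi>" for \<xi>
  proof -
    have "?m \<xi> * (\<Sum>j. u0_term_ft j \<xi>) = (\<Sum>j. if j = n - 3 then u0_term_ft j \<xi> else 0)"
      by (simp only: suminf_mult[OF summable_u0_term_ft, symmetric] LP_multiplier_u0_term_ft[OF assms])
    then show ?thesis
      by (simp add: sums_unique[OF sums_single, symmetric])
  qed
  then have "complex_of_real (?m \<xi>) * fourier (\<lambda>x. complex_of_real (u0 \<phi>h s x)) \<xi>
      = complex_of_real (u0_term_ft (n - 3) \<xi>)" for \<xi>
    by (simp only: fourier_u0 of_real_mult[symmetric])
  then have "LP_block th (int n) (u0 \<phi>h s) x = inv_fourier (\<lambda>\<xi>. complex_of_real (u0_term_ft (n - 3) \<xi>)) x"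
    by (simp only: LP_block_of_nat fmult_def)
  also have "\<dots> = complex_of_real (ampl s (n - 3) * phi_scale)
      * inv_fourier (\<lambda>\<xi>. complex_of_real ((\<phi>h (\<xi> - freq (n - 3)) + \<phi>h (\<xi> + freq (n - 3))) / 2)) x"
    unfolding inv_fourier_def u0_term_ft_def
    by (simp add: integral_mult_right_zero[symmetric] mult.assoc del: integral_mult_right_zero)
  also have "\<dots> = complex_of_real (u0_term (n - 3) x)"
    by (simp only: phi.inv_fourier_modulation) (simp add: u0_term_eq)
  finally show ?thesis .
qed

lemma LP_multiplier_psi:
  assumes "n \<ge> 1"
  shows "(th (\<xi> / (2 * 2 ^ n)) - th (\<xi> / 2 ^ n)) * \<psi>h \<xi> = 0"
proof (cases "\<psi>h \<xi> = 0")
  case False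
  then have "\<bar>\<xi>\<bar> < 3/4"
    using psi_zero by force
  moreover have "(2::real) ^ n \<ge> 2"
    using power_increasing[OF assms, of "2::real"] by simp
  ultimately show ?thesis
    using th_scaled_one[of "2 ^ n" \<xi>] th_scaled_one[of "2 * 2 ^ n" \<xi>] by simp
qed simp

lemma fourier_u0n:
  "fourier (\<lambda>x. complex_of_real (u0n \<phi>h \<psi>h s n x)) \<xi>
    = fourier (\<lambda>x. complex_of_real (u0 \<phi>h s x)) \<xi> + complex_of_real (\<psi>h \<xi> / schw_of \<psi>h 0) / of_nat n"
proof -
  have "(\<lambda>x. complex_of_real (u0n \<phi>h \<psi>h s n x) * cis (- (x * \<xi>)))
      = (\<lambda>x. complex_of_real (u0 \<phi>h s x) * cis (- (x * \<xi>))
          + complex_of_real (schw_of \<psi>h x) * cis (- (x * \<xi>)) / complex_of_real (schw_of \<psi>h 0 * real n))"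
    by (simp add: fun_eq_iff u0n_def Phi_fun_def algebra_simps)
  moreover have "(\<integral>x. complex_of_real (schw_of \<psi>h x) * cis (- (x * \<xi>)) \<partial>lborel) = complex_of_real (\<psi>h \<xi>)"
    using psi.fourier_schw_of by (simp add: fourier_def)
  ultimately show ?thesis
    unfolding fourier_def
    by (simp add: Bochner_Integration.integral_add[OF u0_cis_integrable integrable_divide_zero[OF psi.schw_of_cis_integrable]])
qed

lemma LP_block_u0n:
  assumes "n \<ge> 4"
  shows "LP_block th (int n) (u0n \<phi>h \<psi>h s n) = LP_block th (int n) (u0 \<phi>h s)"
proof -
  let ?m = "\<lambda>\<xi>. th (\<xi> / (2 * 2 ^ n)) - th (\<xi> / 2 ^ n)"
  have "complex_of_real (?m \<xi>) * fourier (\<lambda>x. complex_of_real (u0n \<phi>h \<psi>h s n x)) \<xi>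
      = complex_of_real (?m \<xi>) * fourier (\<lambda>x. complex_of_real (u0 \<phi>h s x)) \<xi>" for \<xi>
  proof -
    have "complex_of_real (?m \<xi>) * complex_of_real (\<psi>h \<xi> / schw_of \<psi>h 0) = 0"
      using LP_multiplier_psi[of n \<xi>] assms by (simp only: of_real_mult[symmetric]) simp
    then show ?thesis
      by (simp only: fourier_u0n distrib_left times_divide_eq_right) simp
  qed
  then show ?thesis
    by (simp only: LP_block_of_nat fmult_def)
qed

end

section \<open>Separation of the two approximate solutions\<close>

lemma abs_cos_add_cos_shift_le: "\<bar>cos \<theta> + cos (\<theta> - pi * c)\<bar> \<le> pi * \<bar>1 - c\<bar>"
proof -
  have "\<bar>cos \<theta> + cos (\<theta> - pi * c)\<bar> = \<bar>cos (\<theta> - pi * c) - cos (\<theta> - pi)\<bar>"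
    by simp
  also have "\<dots> \<le> \<bar>(\<theta> - pi * c) - (\<theta> - pi)\<bar>"
    by (rule abs_cos_diff_le)
  also have "\<dots> = \<bar>pi * (1 - c)\<bar>"
    by (rule arg_cong[where f = abs]) (simp add: algebra_simps)
  also have "\<dots> = pi * \<bar>1 - c\<bar>"
    by (simp add: abs_mult)
  finally show ?thesis .
qed

lemma abs_cos_or_abs_sin_ge: "7/10 \<le> \<bar>cos \<theta>\<bar> \<or> 7/10 \<le> \<bar>sin (\<theta> :: real)\<bar>"
proof (rule ccontr)
  assume "\<not> ?thesis"
  then have "\<bar>cos \<theta>\<bar> < 7/10" "\<bar>sin \<theta>\<bar> < 7/10"
    by auto
  then have "\<bar>cos \<theta>\<bar> * \<bar>cos \<theta>\<bar> < 7/10 * (7/10)" "\<bar>sin \<theta>\<bar> * \<bar>sin \<theta>\<bar> < 7/10 * (7/10)"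
    by (intro mult_strict_mono'; simp)+
  moreover have "cos \<theta> * cos \<theta> + sin \<theta> * sin \<theta> = 1"
    using sin_cos_squared_add[of \<theta>] by (simp add: power2_eq_square)
  ultimately show False
    unfolding abs_mult_self_eq by linarith
qed

definition blowup_time :: "nat \<Rightarrow> real" where
  "blowup_time n = 8 / 11 * pi * real n * 2 powr (- real n)"

lemma blowup_time_nonneg: "blowup_time n \<ge> 0"
  by (simp add: blowup_time_def)

lemma freq_mult_blowup_time:
  assumes "n \<ge> 3"
  shows "freq (n - 3) * blowup_time n = pi * real n"
  using assms by (simp add: freq_def blowup_time_def powr_minus powr_realpow field_simps)

lemma quarter_period_le: "pi / (2 * freq (n - 3)) \<le> 4 * pi / 11 / 2 ^ n"
proof -
  have "pi / (2 * freq (n - 3)) = 4 * pi / 11 / 2 ^ (n - 3 + 3)"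
    by (simp add: freq_def)
  also have "\<dots> \<le> 4 * pi / 11 / 2 ^ n"
    by (intro divide_left_mono power_increasing) auto
  finally show ?thesis .
qed

lemma two_powr_mult_ampl:
  assumes "n \<ge> 3"
  shows "2 powr (real n * s) * ampl s (n - 3) = 1"
  using assms by (simp add: ampl_def powr_add[symmetric])

lemma two_powr_le_dyadic_powr:
  assumes "0 \<le> e" "e \<le> 1"
  shows "2 powr (- (real N * e) - 1) \<le> (2 powr (- real N) / 2) powr e"
proof -
  have "2 powr (- real N) / 2 = 2 powr (- real N - 1)"
    by (simp add: powr_diff)
  then have "(2 powr (- real N) / 2) powr e = 2 powr ((- real N - 1) * e)"
    by (simp add: powr_powr)
  moreover have "- (real N * e) - 1 \<le> (- real N - 1) * e"
    using assms by (simp add: algebra_simps)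
  ultimately show ?thesis
    by simp
qed

context initial_data
begin

definition profile_diff :: "nat \<Rightarrow> real \<Rightarrow> real" where
  "profile_diff n x =
     phi_tilde \<phi>h s (x - blowup_time n * u0 \<phi>h s x) * cos (freq (n - 3) * (x - blowup_time n * u0 \<phi>h s x))
   - phi_tilde \<phi>h s (x - blowup_time n * u0n \<phi>h \<psi>h s n x)
       * cos (freq (n - 3) * (x - blowup_time n * u0n \<phi>h \<psi>h s n x))"

lemma profile_diff_borel [measurable]: "profile_diff n \<in> borel_measurable borel"
  unfolding profile_diff_def phi_tilde_eq u0n_def Phi_fun_def by measurable

lemma LP_block_diff_eq:
  assumes "n \<ge> 4"
  shows "LP_block th (int n) (u0 \<phi>h s) (x - blowup_time n * u0 \<phi>h s x)
      - LP_block th (int n) (u0n \<phi>h \<psi>h s n) (x - blowup_time n * u0n \<phi>h \<psi>h s n x)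
    = complex_of_real (ampl s (n - 3) * profile_diff n x)"
  using assms by (simp add: LP_block_u0n LP_block_u0 u0_term_def profile_diff_def algebra_simps)

lemma abs_Phi_le_one: "\<bar>Phi_fun \<psi>h z\<bar> \<le> 1"
  using psi.abs_schw_of_le[of z] psi.schw_of_zero_pos by (simp add: Phi_fun_def abs_divide)

lemma abs_one_minus_Phi_le: "\<bar>1 - Phi_fun \<psi>h z\<bar> \<le> \<bar>z\<bar>"
proof -
  have "1 - Phi_fun \<psi>h z = (schw_of \<psi>h 0 - schw_of \<psi>h z) / schw_of \<psi>h 0"
    using psi.schw_of_zero_pos by (simp add: Phi_fun_def diff_divide_distrib)
  then show ?thesis
    using psi.schw_of_lipschitz[of 0 z] psi.schw_of_zero_pos
    by (simp add: abs_divide pos_divide_le_eq mult.commute)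
qed

lemma abs_blowup_time_mult_u0_le:
  assumes "blowup_time n * (u0_sup + 1) \<le> \<delta>"
  shows "\<bar>blowup_time n * u0 \<phi>h s x\<bar> \<le> \<delta>"
proof -
  have "\<bar>blowup_time n * u0 \<phi>h s x\<bar> \<le> blowup_time n * (u0_sup + 1)"
    using abs_u0_le[of x] blowup_time_nonneg[of n] by (simp add: abs_mult mult_left_mono)
  then show ?thesis using assms by simp
qed

lemma abs_blowup_time_mult_u0n_le:
  assumes "blowup_time n * (u0_sup + 1) \<le> \<delta>" "n \<ge> 1"
  shows "\<bar>blowup_time n * u0n \<phi>h \<psi>h s n x\<bar> \<le> \<delta>"
proof -
  have "\<bar>Phi_fun \<psi>h x / real n\<bar> \<le> 1"
    using abs_Phi_le_one[of x] assms(2) by (simp add: abs_divide divide_le_eq_1)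
  then have "\<bar>u0n \<phi>h \<psi>h s n x\<bar> \<le> u0_sup + 1"
    using abs_u0_le[of x] abs_triangle_ineq[of "u0 \<phi>h s x" "Phi_fun \<psi>h x / real n"]
    unfolding u0n_def by linarith
  then have "\<bar>blowup_time n * u0n \<phi>h \<psi>h s n x\<bar> \<le> blowup_time n * (u0_sup + 1)"
    using blowup_time_nonneg[of n] by (simp add: abs_mult mult_left_mono)
  then show ?thesis using assms by simp
qed

lemma phi_tilde_characteristic_ge:
  assumes "0 < \<delta>" and plateau: "\<forall>x\<in>{0..2 * pi * \<delta>}. schw_of \<phi>h x \<ge> schw_of \<phi>h 0 / 2"
    and "\<delta> \<le> z" "z \<le> 3 * \<delta>" "\<bar>y\<bar> \<le> \<delta>"
  shows "phi_tilde \<phi>h s (z - y) \<ge> gam s / 2"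
proof (intro phi_tilde_ge_half plateau[rule_format])
  have "4 * \<delta> \<le> 2 * pi * \<delta>"
    using pi_gt3 assms(1) by simp
  then show "z - y \<in> {0..2 * pi * \<delta>}"
    using assms(3-5) by (auto simp: abs_le_iff)
qed

lemma freq_mult_characteristic_u0n:
  assumes "n \<ge> 4"
  shows "freq (n - 3) * (z - blowup_time n * u0n \<phi>h \<psi>h s n z)
    = freq (n - 3) * (z - blowup_time n * u0 \<phi>h s z) - pi * Phi_fun \<psi>h z"
proof -
  have "freq (n - 3) * (z - blowup_time n * u0n \<phi>h \<psi>h s n z)
      = freq (n - 3) * (z - blowup_time n * u0 \<phi>h s z) - freq (n - 3) * blowup_time n * (Phi_fun \<psi>h z / real n)"
    by (simp add: u0n_def algebra_simps)
  then show ?thesis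
    using freq_mult_blowup_time[of n] assms by simp
qed

lemma profile_diff_ge:
  assumes n: "n \<ge> 4" and \<delta>: "0 < \<delta>" "\<delta> \<le> 1/128"
    and plateau: "\<forall>x\<in>{0..2 * pi * \<delta>}. schw_of \<phi>h x \<ge> schw_of \<phi>h 0 / 2"
    and time: "blowup_time n * (u0_sup + 1) \<le> \<delta>"
    and z: "\<delta> \<le> z" "z \<le> 3 * \<delta>"
  shows "\<bar>profile_diff n z\<bar> \<ge> gam s * (\<bar>cos (freq (n - 3) * z - pi * real n * u0 \<phi>h s z)\<bar> - 1/10)"
proof -
  define \<theta> where "\<theta> = freq (n - 3) * z - pi * real n * u0 \<phi>h s z"
  define \<Phi> where "\<Phi> = Phi_fun \<psi>h z"
  define y1 where "y1 = z - blowup_time n * u0 \<phi>h s z"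
  define y2 where "y2 = z - blowup_time n * u0n \<phi>h \<psi>h s n z"
  let ?p = "phi_tilde \<phi>h s"
  have p1: "?p y1 \<ge> gam s / 2" and p2: "?p y2 \<ge> gam s / 2"
    unfolding y1_def y2_def using n
    by (intro phi_tilde_characteristic_ge[OF \<delta>(1) plateau z] abs_blowup_time_mult_u0_le[OF time]
        abs_blowup_time_mult_u0n_le[OF time]; simp)+
  have phase1: "freq (n - 3) * y1 = \<theta>"
    using freq_mult_blowup_time[of n] n by (simp add: y1_def \<theta>_def algebra_simps)
  have phase2: "freq (n - 3) * y2 = \<theta> - pi * \<Phi>"
    using freq_mult_characteristic_u0n[OF n, of z] phase1 by (simp add: y1_def y2_def \<Phi>_def)
  have diff: "profile_diff n z = (?p y1 + ?p y2) * cos \<theta> - ?p y2 * (cos \<theta> + cos (\<theta> - pi * \<Phi>))"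
    unfolding profile_diff_def y1_def[symmetric] y2_def[symmetric] phase1 phase2 by (simp add: algebra_simps)
  have "\<bar>cos \<theta> + cos (\<theta> - pi * \<Phi>)\<bar> \<le> pi * \<bar>1 - \<Phi>\<bar>"
    by (rule abs_cos_add_cos_shift_le)
  also have "\<dots> \<le> 4 * (3 * \<delta>)"
    using abs_one_minus_Phi_le[of z] z \<delta> pi_less_4 by (intro mult_mono) (auto simp: \<Phi>_def)
  finally have "\<bar>?p y2 * (cos \<theta> + cos (\<theta> - pi * \<Phi>))\<bar> \<le> gam s * (1/10)"
    unfolding abs_mult using abs_phi_tilde_le[of y2] \<delta>(2) by (intro mult_mono) auto
  moreover have "gam s * \<bar>cos \<theta>\<bar> \<le> \<bar>(?p y1 + ?p y2) * cos \<theta>\<bar>"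
    using p1 p2 by (simp add: abs_mult mult_right_mono)
  ultimately show ?thesis
    unfolding \<theta>_def[symmetric] diff
    using abs_triangle_ineq2[of "(?p y1 + ?p y2) * cos \<theta>" "?p y2 * (cos \<theta> + cos (\<theta> - pi * \<Phi>))"]
    by (simp add: right_diff_distrib)
qed

lemma abs_phase_drift_le:
  assumes "q \<ge> 0" "pi * real n * u0_lip * q \<le> 1/10"
  shows "\<bar>pi * real n * (u0 \<phi>h s (x + q) - u0 \<phi>h s x)\<bar> \<le> 1/10"
proof -
  have "\<bar>pi * real n * (u0 \<phi>h s (x + q) - u0 \<phi>h s x)\<bar> \<le> pi * real n * (u0_lip * \<bar>(x + q) - x\<bar>)"
    unfolding abs_mult using u0_lipschitz[of "x + q" x] by (simp add: mult_left_mono)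
  then show ?thesis
    using assms by (simp add: mult.assoc)
qed

text \<open>Moving by a quarter period of the carrier turns the cosine of the phase into a sine, up to
  the drift \<open>e\<close> of \<open>u0\<close>; one of the two is at least \<open>7/10\<close> in absolute value.\<close>

lemma profile_diff_alternative:
  assumes n: "n \<ge> 4" and \<delta>: "0 < \<delta>" "\<delta> \<le> 1/128"
    and plateau: "\<forall>x\<in>{0..2 * pi * \<delta>}. schw_of \<phi>h x \<ge> schw_of \<phi>h 0 / 2"
    and time: "blowup_time n * (u0_sup + 1) \<le> \<delta>"
    and quarter: "pi / (2 * freq (n - 3)) \<le> \<delta>"
    and drift: "pi * real n * u0_lip * (pi / (2 * freq (n - 3))) \<le> 1/10"
    and x: "\<delta> \<le> x" "x \<le> 2 * \<delta>"
  shows "gam s / 2 \<le> \<bar>profile_diff n x\<bar> \<or> gam s / 2 \<le> \<bar>profile_diff n (x + pi / (2 * freq (n - 3)))\<bar>"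
proof -
  define A where "A = freq (n - 3)"
  define q where "q = pi / (2 * A)"
  define \<theta> where "\<theta> = A * x - pi * real n * u0 \<phi>h s x"
  define e where "e = pi * real n * (u0 \<phi>h s (x + q) - u0 \<phi>h s x)"
  have q: "q > 0" "A * q = pi / 2"
    using freq_pos[of "n - 3"] by (simp_all add: q_def A_def)
  have e: "\<bar>e\<bar> \<le> 1/10"
    unfolding e_def using q(1) drift by (intro abs_phase_drift_le) (auto simp: q_def A_def)
  have at_x: "gam s * (\<bar>cos \<theta>\<bar> - 1/10) \<le> \<bar>profile_diff n x\<bar>"
    unfolding \<theta>_def A_def using profile_diff_ge[OF n \<delta> plateau time, of x] x \<delta> by simp
  have at_xq: "gam s * (\<bar>sin (\<theta> - e)\<bar> - 1/10) \<le> \<bar>profile_diff n (x + q)\<bar>"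
  proof -
    have "A * (x + q) - pi * real n * u0 \<phi>h s (x + q) = (\<theta> - e) + pi / 2"
      using q(2) by (simp add: \<theta>_def e_def algebra_simps)
    then show ?thesis
      using profile_diff_ge[OF n \<delta> plateau time, of "x + q"] x q(1) quarter
      by (simp add: A_def q_def cos_add)
  qed
  have "\<bar>sin \<theta>\<bar> - \<bar>e\<bar> \<le> \<bar>sin (\<theta> - e)\<bar>"
    using abs_sin_diff_le[of \<theta> "\<theta> - e"] by simp
  from abs_cos_or_abs_sin_ge[of \<theta>] show ?thesis
  proof
    assume "7/10 \<le> \<bar>cos \<theta>\<bar>"
    then have "gam s * (1/2) \<le> gam s * (\<bar>cos \<theta>\<bar> - 1/10)"
      using gam_pos by (intro mult_left_mono) auto
    then show ?thesis
      using at_x by simp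
  next
    assume "7/10 \<le> \<bar>sin \<theta>\<bar>"
    then have "gam s * (1/2) \<le> gam s * (\<bar>sin (\<theta> - e)\<bar> - 1/10)"
      using \<open>\<bar>sin \<theta>\<bar> - \<bar>e\<bar> \<le> \<bar>sin (\<theta> - e)\<bar>\<close> e gam_pos by (intro mult_left_mono) auto
    then show ?thesis
      using at_xq by (simp add: q_def A_def)
  qed
qed

lemma eventually_blowup_conditions:
  assumes "\<delta> > 0"
  shows "\<forall>\<^sub>F n in sequentially. 4 \<le> n \<and> blowup_time n * (u0_sup + 1) \<le> \<delta>
    \<and> pi / (2 * freq (n - 3)) \<le> \<delta> \<and> pi * real n * u0_lip * (pi / (2 * freq (n - 3))) \<le> 1/10"
proof -
  have "(\<lambda>n. real n * 2 powr (- real n)) \<longlonglongrightarrow> 0" "(\<lambda>n. 1 / 2 ^ n :: real) \<longlonglongrightarrow> 0"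
    "(\<lambda>n. real n / 2 ^ n :: real) \<longlonglongrightarrow> 0"
    by real_asymp+
  note limits = this[THEN tendsto_mult_right_zero, THEN order_tendstoD(2)]
  have "\<forall>\<^sub>F n in sequentially. 8 / 11 * pi * (u0_sup + 1) * (real n * 2 powr (- real n)) < \<delta>"
    "\<forall>\<^sub>F n in sequentially. 4 * pi / 11 * (1 / 2 ^ n) < \<delta>"
    "\<forall>\<^sub>F n in sequentially. pi * u0_lip * (4 * pi / 11) * (real n / 2 ^ n) < 1/10"
    by (rule limits; use assms in simp)+
  moreover have "\<forall>\<^sub>F n in sequentially. 4 \<le> n"
    by (rule eventually_ge_at_top)
  ultimately show ?thesis
  proof eventually_elim
    case (elim n)
    have "blowup_time n * (u0_sup + 1) = 8 / 11 * pi * (u0_sup + 1) * (real n * 2 powr (- real n))"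
      by (simp add: blowup_time_def)
    moreover have "pi / (2 * freq (n - 3)) \<le> 4 * pi / 11 * (1 / 2 ^ n)"
      using quarter_period_le[of n] by simp
    moreover have "pi * real n * u0_lip * (pi / (2 * freq (n - 3))) \<le> pi * real n * u0_lip * (4 * pi / 11 / 2 ^ n)"
      using quarter_period_le u0_lip_nonneg by (intro mult_left_mono) auto
    moreover have "pi * real n * u0_lip * (4 * pi / 11 / 2 ^ n) = pi * u0_lip * (4 * pi / 11) * (real n / 2 ^ n)"
      by simp
    ultimately show ?case
      using elim by linarith
  qed
qed

lemma Lp_norm_LP_block_diff_ge:
  assumes p: "p \<ge> 1" and n: "n \<ge> 4" and \<delta>: "0 < \<delta>" "\<delta> \<le> 1/128"
    and plateau: "\<forall>x\<in>{0..2 * pi * \<delta>}. schw_of \<phi>h x \<ge> schw_of \<phi>h 0 / 2"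
    and time: "blowup_time n * (u0_sup + 1) \<le> \<delta>"
    and quarter: "pi / (2 * freq (n - 3)) \<le> \<delta>"
    and drift: "pi * real n * u0_lip * (pi / (2 * freq (n - 3))) \<le> 1/10"
  shows "ennreal (ampl s (n - 3) * (gam s / 2) * (\<delta> / 2) powr inv_exp p)
    \<le> Lp_norm p (\<lambda>x. LP_block th (int n) (u0 \<phi>h s) (x - blowup_time n * u0 \<phi>h s x)
                   - LP_block th (int n) (u0n \<phi>h \<psi>h s n) (x - blowup_time n * u0n \<phi>h \<psi>h s n x))"
proof -
  have "ennreal (ampl s (n - 3) * (gam s / 2) * (\<delta> / 2) powr inv_exp p)
      \<le> Lp_norm p (\<lambda>x. complex_of_real (ampl s (n - 3) * profile_diff n x))"
  proof (rule Lp_norm_ge_of_alternative)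
    show "ampl s (n - 3) * (gam s / 2) \<le> cmod (complex_of_real (ampl s (n - 3) * profile_diff n x))
        \<or> ampl s (n - 3) * (gam s / 2)
          \<le> cmod (complex_of_real (ampl s (n - 3) * profile_diff n (x + pi / (2 * freq (n - 3)))))"
      if "x \<in> {\<delta>..\<delta> + \<delta>}" for x
    proof -
      have "cmod (complex_of_real (ampl s (n - 3) * profile_diff n y)) = ampl s (n - 3) * \<bar>profile_diff n y\<bar>" for y
        by (simp only: norm_of_real abs_mult abs_of_pos[OF ampl_pos])
      then show ?thesis
        using profile_diff_alternative[OF n \<delta> plateau time quarter drift, of x] ampl_pos[of s "n - 3"] that
        by (auto intro: mult_left_mono)
    qed
  qed (use \<delta> p ampl_pos gam_pos in auto)
  then show ?thesis
    using n by (simp add: LP_block_diff_eq)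
qed

lemma two_powr_le_scaled_amplitude:
  assumes "p \<ge> 1" "n \<ge> 3"
  shows "2 powr (- (real N0 * inv_exp p) - 3)
    \<le> 2 powr (real n * s) * (ampl s (n - 3) * (gam s / 2) * (2 powr (- real N0) / 2) powr inv_exp p)"
proof -
  have "2 powr (- (real N0 * inv_exp p) - 3) \<le> 2 powr (- (real N0 * inv_exp p) - 1) * 2"
    by (simp add: powr_diff)
  also have "\<dots> \<le> (2 powr (- real N0) / 2) powr inv_exp p * (gam s / 2)"
    using two_powr_le_dyadic_powr[OF inv_exp_nonneg inv_exp_le_one[OF assms(1)], of N0] gam_gt_4[OF s_gt_1]
    by (intro mult_mono) auto
  also have "\<dots> = (2 powr (real n * s) * ampl s (n - 3)) * ((2 powr (- real N0) / 2) powr inv_exp p * (gam s / 2))"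
    by (simp only: two_powr_mult_ampl[OF assms(2)] mult_1)
  also have "\<dots> = 2 powr (real n * s) * (ampl s (n - 3) * (gam s / 2) * (2 powr (- real N0) / 2) powr inv_exp p)"
    by (simp only: mult_ac)
  finally show ?thesis .
qed

theorem LP_block_diff_lower_bound:
  assumes p: "p \<ge> 1" and N0: "N0 \<ge> 7"
    and plateau: "\<forall>x\<in>{0..2 * pi * 2 powr (- real N0)}. schw_of \<phi>h x \<ge> schw_of \<phi>h 0 / 2"
  shows "\<forall>\<^sub>F n in sequentially. ennreal (2 powr (- (real N0 * inv_exp p) - 3))
    \<le> ennreal (2 powr (real n * s))
      * Lp_norm p (\<lambda>x. LP_block th (int n) (u0 \<phi>h s) (x - blowup_time n * u0 \<phi>h s x)
                     - LP_block th (int n) (u0n \<phi>h \<psi>h s n) (x - blowup_time n * u0n \<phi>h \<psi>h s n x))"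
proof -
  define \<delta> :: real where "\<delta> = 2 powr (- real N0)"
  have \<delta>: "0 < \<delta>" "\<delta> \<le> 1/128"
    using N0 powr_mono[of "- real N0" "- 7" 2] by (auto simp: \<delta>_def powr_minus)
  show ?thesis
    using eventually_blowup_conditions[OF \<delta>(1)]
  proof eventually_elim
    case (elim n)
    let ?c = "ampl s (n - 3) * (gam s / 2) * (\<delta> / 2) powr inv_exp p"
    have "ennreal (2 powr (- (real N0 * inv_exp p) - 3)) \<le> ennreal (2 powr (real n * s) * ?c)"
      using two_powr_le_scaled_amplitude[OF p, of n N0] elim by (intro ennreal_leI) (auto simp: \<delta>_def)
    also have "\<dots> = ennreal (2 powr (real n * s)) * ennreal ?c"
      using ampl_pos[of s "n - 3"] gam_pos by (intro ennreal_mult) auto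
    also have "\<dots> \<le> ennreal (2 powr (real n * s))
        * Lp_norm p (\<lambda>x. LP_block th (int n) (u0 \<phi>h s) (x - blowup_time n * u0 \<phi>h s x)
                       - LP_block th (int n) (u0n \<phi>h \<psi>h s n) (x - blowup_time n * u0n \<phi>h \<psi>h s n x))"
      using Lp_norm_LP_block_diff_ge[OF p _ \<delta> plateau[folded \<delta>_def]] elim by (intro mult_left_mono) auto
    finally show ?case .
  qed
qed

end

theorem proposition3p11:
  fixes th \<phi>h \<psi>h :: "real \<Rightarrow> real" and p :: ennreal and s :: real
  assumes th_smooth: "smooth_fun th"
    and th_even: "\<And>\<xi>. th (- \<xi>) = th \<xi>"
    and th_range: "\<And>\<xi>. 0 \<le> th \<xi> \<and> th \<xi> \<le> 1"
    and th_supp: "\<And>\<xi>. \<bar>\<xi>\<bar> > 4 / 3 \<Longrightarrow> th \<xi> = 0"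
    and th_one: "\<And>\<xi>. \<bar>\<xi>\<bar> \<le> 3 / 4 \<Longrightarrow> th \<xi> = 1"
    and ph_smooth: "smooth_fun \<phi>h"
    and ph_even: "\<And>\<xi>. \<phi>h (- \<xi>) = \<phi>h \<xi>"
    and ph_range: "\<And>\<xi>. 0 \<le> \<phi>h \<xi> \<and> \<phi>h \<xi> \<le> 1"
    and ph_one: "\<And>\<xi>. \<bar>\<xi>\<bar> \<le> 1 / 4 \<Longrightarrow> \<phi>h \<xi> = 1"
    and ph_zero: "\<And>\<xi>. \<bar>\<xi>\<bar> \<ge> 1 / 2 \<Longrightarrow> \<phi>h \<xi> = 0"
    and ps_smooth: "smooth_fun \<psi>h"
    and ps_even: "\<And>\<xi>. \<psi>h (- \<xi>) = \<psi>h \<xi>"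
    and ps_range: "\<And>\<xi>. 0 \<le> \<psi>h \<xi> \<and> \<psi>h \<xi> \<le> 1"
    and ps_one: "\<And>\<xi>. 1 / 2 \<le> \<bar>\<xi>\<bar> \<Longrightarrow> \<bar>\<xi>\<bar> \<le> 5 / 8 \<Longrightarrow> \<psi>h \<xi> = 1"
    and ps_zero: "\<And>\<xi>. \<bar>\<xi>\<bar> \<ge> 3 / 4 \<or> \<bar>\<xi>\<bar> \<le> 3 / 8 \<Longrightarrow> \<psi>h \<xi> = 0"
    and p_ge: "p \<ge> 1"
    and s_gt: "s > 1 + inv_exp p"
  shows "\<exists>N1::nat. \<forall>N0::nat. N0 \<ge> N1 \<longrightarrow>
           (\<forall>x\<in>{0 .. 2 * pi * 2 powr (- real N0)}. schw_of \<phi>h x \<ge> schw_of \<phi>h 0 / 2) \<longrightarrow>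
           (\<forall>\<^sub>F n in sequentially.
              let t = 8 / 11 * pi * real n * 2 powr (- real n)
              in ennreal (2 powr (real n * s)) *
                   Lp_norm p (\<lambda>x. LP_block th (int n) (u0 \<phi>h s) (x - t * u0 \<phi>h s x)
                                 - LP_block th (int n) (u0n \<phi>h \<psi>h s n) (x - t * u0n \<phi>h \<psi>h s n x))
                 \<ge> ennreal (2 powr (- (real N0 * inv_exp p) - 3)))"
proof -
  have "s > 1"
    using s_gt inv_exp_nonneg[of p] by linarith
  then interpret initial_data \<phi>h \<psi>h th s
    using ph_smooth ph_even ph_range ph_one ph_zero ps_smooth ps_even ps_range ps_one ps_zero th_supp th_one
    by unfold_locales auto
  show ?thesis
    unfolding Let_def blowup_time_def[symmetric]
    using LP_block_diff_lower_bound[OF p_ge] by (intro exI[of _ 7]) auto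
qed

end
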